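(* Let $(X,d,A)$ be a metric pair and let $p\in[1,\infty]$. Then the following are equivalent: (i) for every $\alpha,\beta\in\overline{D}_p(X,A)$ with $W_p(\alpha,\beta)<\infty$ there exists an optimal matching $\sigma\in\overline{D}(X\times X,A\times A)$ of $\alpha$ and $\beta$; (ii) $A$ is distance minimizing, i.e. for each $x\in X$ with $d(x,A)<\infty$ there exists $a\in A$ with $d(x,A)=d(x,a)$.
   Context: A metric on a set $X$ is a map $d:X\times X\to[0,\infty]$ with $d(x,x)=0$, $d(x,y)=d(y,x)$ and $d(x,z)\le d(x,y)+d(y,z)$; infinite distances are allowed and $d(x,y)=0$ need not imply $x=y$. A metric pair $(X,d,A)$ is a metric space $(X,d)$ together with a closed subset $A\subset X$. Write $d(x,A)=\inf_{a\in A}d(x,a)$ and, for $\delta\in(0,\infty]$, $A^\delta=\{x\in X: d(x,A)<\delta\}$. A (countable) persistence diagram $\alpha\in\overline{D}(X,A)$ is a function $\hat\alpha:X\setminus A\to\mathbb{Z}_{\ge0}$ with countable support, written as a formal sum $\hat\alpha=\sum_{i\in I}x_i$ ($I$ countable, $x_i\in X\setminus A$, repetitions allowed); equivalently, a countable formal sum of points of $X$ modulo formal sums of points of $A$. $0$ denotes the empty diagram, $|\alpha|=|I|$. Similarly $\overline{D}(X\times X,A\times A)$ consists of countable formal sums of points of $(X\times X)\setminus(A\times A)$. Given $\hat\alpha=\sum_{i\in I}x_i$ and $\hat\beta=\sum_{j\in J}y_j$, a matching of $\alpha$ and $\beta$ is an element $\sigma$ of the form $\hat\sigma=\sum_{k\in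 K}(x_k,y_{\varphi(k)})+\sum_{i\in I\setminus K}(x_i,z_i)+\sum_{j\in J\setminus\varphi(K)}(w_j,y_j)$ for some $K\subset I$, injection $\varphi:K\to J$, and points $z_i,w_j\in A$. Writing $\hat\sigma=\sum_{l\in L}(u_l,v_l)$, its $p$-cost is $\mathrm{Cost}_p(\sigma)=\|(d(u_l,v_l))_{l\in L}\|_p\in[0,\infty]$ (the $\ell^p$ norm, sup norm if $p=\infty$). The $p$-Wasserstein distance is $W_p(\alpha,\beta)=\inf_\sigma\mathrm{Cost}_p(\sigma)$ over all matchings; an optimal matching is one with $\mathrm{Cost}_p(\sigma)=W_p(\alpha,\beta)$. For $\alpha$ and $\delta\in(0,\infty]$, the $\delta$-upper part $u_\delta(\alpha)$ is the restriction of $\hat\alpha$ to $X\setminus A^\delta$ and the $\delta$-lower part $\ell_\delta(\alpha)$ is the restriction to $A^\delta\setminus A$. For $p\in[1,\infty)$, $\overline{D}_p(X,A)=\{\alpha\in\overline{D}(X,A): |u_\infty(\alpha)|<\infty,\ W_p(\ell_\infty(\alpha),0)<\infty\}$; and $\overline{D}_\infty(X,A)=\{\alpha: |u_\delta(\alpha)|<\infty\text{ for all }\delta>0\}$. *)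

theory Defs
  imports "HOL-Analysis.Analysis"
begin

(* Extended pseudo-metric on the whole type 'a (X = UNIV), values in [0,\<infinity>]. *)
definition emetric :: "('a \<Rightarrow> 'a \<Rightarrow> ennreal) \<Rightarrow> bool" where
  "emetric d \<longleftrightarrow> (\<forall>x. d x x = 0) \<and> (\<forall>x y. d x y = d y x) \<and>
     (\<forall>x y z. d x z \<le> d x y + d y z)"

definition eclosed :: "('a \<Rightarrow> 'a \<Rightarrow> ennreal) \<Rightarrow> 'a set \<Rightarrow> bool" where
  "eclosed d A \<longleftrightarrow> (\<forall>x. x \<notin> A \<longrightarrow> (\<exists>e::real>0. \<forall>y. d x y < ennreal e \<longrightarrow> y \<notin> A))"

(* d(x,A) = inf over a in A (= \<infinity> if A empty) *)
definition setdist :: "('a \<Rightarrow> 'a \<Rightarrow> ennreal) \<Rightarrow> 'a \<Rightarrow> 'a set \<Rightarrow> ennreal" where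
  "setdist d x A = (INF a\<in>A. d x a)"

definition thick :: "('a \<Rightarrow> 'a \<Rightarrow> ennreal) \<Rightarrow> 'a set \<Rightarrow> ennreal \<Rightarrow> 'a set" where
  "thick d A \<delta> = {x. setdist d x A < \<delta>}"

definition dist_minimizing :: "('a \<Rightarrow> 'a \<Rightarrow> ennreal) \<Rightarrow> 'a set \<Rightarrow> bool" where
  "dist_minimizing d A \<longleftrightarrow>
     (\<forall>x. setdist d x A < \<infinity> \<longrightarrow> (\<exists>a\<in>A. setdist d x A = d x a))"

(* Persistence diagrams in D(X,A): functions X\A \<rightarrow> Z_{\<ge>0} with countable support,
   represented as functions 'a \<Rightarrow> nat vanishing on A. *)
definition dgm :: "'b set \<Rightarrow> ('b \<Rightarrow> nat) set" where
  "dgm S = {f. countable {u. f u \<noteq> 0} \<and> (\<forall>u\<in>S. f u = 0)}"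

(* f is the formal sum \<Sum>_{i\<in>I} x_i with all x_i outside S (countable index set I \<subseteq> nat) *)
definition is_fsum :: "'b set \<Rightarrow> ('b \<Rightarrow> nat) \<Rightarrow> nat set \<Rightarrow> (nat \<Rightarrow> 'b) \<Rightarrow> bool" where
  "is_fsum S f I x \<longleftrightarrow> (\<forall>i\<in>I. x i \<notin> S) \<and>
     (\<forall>u. finite {i\<in>I. x i = u} \<and> f u = card {i\<in>I. x i = u})"

definition is_matching :: "'a set \<Rightarrow> ('a \<Rightarrow> nat) \<Rightarrow> ('a \<Rightarrow> nat) \<Rightarrow> ('a \<times> 'a \<Rightarrow> nat) \<Rightarrow> bool" where
  "is_matching A \<alpha> \<beta> \<sigma> \<longleftrightarrow>
    (\<exists>I x J y K \<phi> z w. is_fsum A \<alpha> I x \<and> is_fsum A \<beta> J y \<and>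
       K \<subseteq> I \<and> inj_on \<phi> K \<and> \<phi> ` K \<subseteq> J \<and>
       (\<forall>i\<in>I - K. z i \<in> A) \<and> (\<forall>j\<in>J - \<phi> ` K. w j \<in> A) \<and>
       \<sigma> = (\<lambda>q. card {k\<in>K. (x k, y (\<phi> k)) = q} + card {i\<in>I - K. (x i, z i) = q}
                 + card {j\<in>J - \<phi> ` K. (w j, y j) = q}))"

definition enn_powr :: "ennreal \<Rightarrow> real \<Rightarrow> ennreal" where
  "enn_powr x r = (if x = \<infinity> then \<infinity> else ennreal (enn2real x powr r))"

definition Cost :: "('a \<Rightarrow> 'a \<Rightarrow> ennreal) \<Rightarrow> ennreal \<Rightarrow> ('a \<times> 'a \<Rightarrow> nat) \<Rightarrow> ennreal" where
  "Cost d p \<sigma> = (if p = \<infinity> then (SUP q\<in>{q. \<sigma> q \<noteq> 0}. d (fst q) (snd q))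
     else enn_powr (\<integral>\<^sup>+ q. of_nat (\<sigma> q) * enn_powr (d (fst q) (snd q)) (enn2real p)
                      \<partial>count_space UNIV) (1 / enn2real p))"

definition Wp :: "('a \<Rightarrow> 'a \<Rightarrow> ennreal) \<Rightarrow> 'a set \<Rightarrow> ennreal \<Rightarrow> ('a \<Rightarrow> nat) \<Rightarrow> ('a \<Rightarrow> nat) \<Rightarrow> ennreal" where
  "Wp d A p \<alpha> \<beta> = (INF \<sigma>\<in>{\<sigma>. is_matching A \<alpha> \<beta> \<sigma>}. Cost d p \<sigma>)"

definition restr :: "'a set \<Rightarrow> ('a \<Rightarrow> nat) \<Rightarrow> ('a \<Rightarrow> nat)" where
  "restr S \<alpha> = (\<lambda>x. if x \<in> S then \<alpha> x else 0)"

definition dsize :: "('a \<Rightarrow> nat) \<Rightarrow> ennreal" where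
  "dsize \<alpha> = (\<integral>\<^sup>+ x. of_nat (\<alpha> x) \<partial>count_space UNIV)"

definition upper_part :: "('a \<Rightarrow> 'a \<Rightarrow> ennreal) \<Rightarrow> 'a set \<Rightarrow> ennreal \<Rightarrow> ('a \<Rightarrow> nat) \<Rightarrow> ('a \<Rightarrow> nat)" where
  "upper_part d A \<delta> \<alpha> = restr (- thick d A \<delta>) \<alpha>"

definition lower_part :: "('a \<Rightarrow> 'a \<Rightarrow> ennreal) \<Rightarrow> 'a set \<Rightarrow> ennreal \<Rightarrow> ('a \<Rightarrow> nat) \<Rightarrow> ('a \<Rightarrow> nat)" where
  "lower_part d A \<delta> \<alpha> = restr (thick d A \<delta> - A) \<alpha>"

definition Dp :: "('a \<Rightarrow> 'a \<Rightarrow> ennreal) \<Rightarrow> 'a set \<Rightarrow> ennreal \<Rightarrow> ('a \<Rightarrow> nat) set" where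
  "Dp d A p = (if p = \<infinity> then
       {\<alpha>\<in>dgm A. \<forall>\<delta>>0. dsize (upper_part d A \<delta> \<alpha>) < \<infinity>}
     else {\<alpha>\<in>dgm A. dsize (upper_part d A \<infinity> \<alpha>) < \<infinity> \<and>
                    Wp d A p (lower_part d A \<infinity> \<alpha>) (\<lambda>_. 0) < \<infinity>})"

end

theory Submission
  imports Defs
begin

(*
  If A is not distance minimizing, take x with d(x, A) finite but not attained. Matching the
  one-point diagram x with the empty diagram costs d(x, a) for the chosen partner a in A, and
  these costs approach d(x, A); so W_p is d(x, A) at most, but no matching attains it.

  Conversely, let sigma_n be matchings of cost at most W_p(alpha, beta) + 1/(n+1). Their
  multiplicities are bounded by those of alpha and beta, so along a subsequence they become
  eventually constant at every pair off A, with limit tau. In the limit the row of a point u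
  may lose mass, which escapes from every finite set of columns. As beta has only finitely
  many points at distance at least delta from A, the escaping mass travels at least
  d(u, A) - delta; hence d(u, A) <= W_p, and the lost mass can be sent to a nearest point of
  A (symmetrically for columns). Comparing finite parts of this completed matching with
  sigma_n for large n shows that its cost is at most W_p.
*)

section \<open>Powers and sums in the extended nonnegative reals\<close>

lemma enn_powr_top [simp]: "enn_powr top r = top"
  by (simp add: enn_powr_def)

lemma enn_powr_zero [simp]: "enn_powr 0 r = 0"
  by (simp add: enn_powr_def)

lemma enn_powr_powr_inverse:
  assumes "r > 0"
  shows "enn_powr (enn_powr t r) (1 / r) = t"
proof (cases t)
  case (real a)
  then show ?thesis
    using assms by (simp add: enn_powr_def powr_powr)
qed (simp add: enn_powr_def)

lemma enn_powr_mono: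
  assumes "s \<le> t" "r \<ge> 0"
  shows "enn_powr s r \<le> enn_powr t r"
proof (cases "t = \<infinity>")
  case False
  then have "s \<noteq> \<infinity>" "enn2real s \<le> enn2real t"
    using assms(1) by (auto simp: top_unique enn2real_mono top.not_eq_extremum)
  then show ?thesis
    using False assms(2) by (simp add: enn_powr_def ennreal_leI powr_mono2)
qed simp

lemma enn_powr_pos:
  assumes "t > 0" "r > 0"
  shows "enn_powr t r > 0"
  using assms by (cases t) (auto simp: enn_powr_def)

lemma enn_powr_inverse_le_iff:
  assumes "r > 0"
  shows "enn_powr s (1 / r) \<le> c \<longleftrightarrow> s \<le> enn_powr c r"
proof
  assume "enn_powr s (1 / r) \<le> c"
  then have "enn_powr (enn_powr s (1 / r)) r \<le> enn_powr c r"
    using assms by (intro enn_powr_mono) auto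
  then show "s \<le> enn_powr c r"
    using enn_powr_powr_inverse[of "1 / r" s] assms by simp
next
  assume "s \<le> enn_powr c r"
  then have "enn_powr s (1 / r) \<le> enn_powr (enn_powr c r) (1 / r)"
    using assms by (intro enn_powr_mono) auto
  then show "enn_powr s (1 / r) \<le> c"
    using enn_powr_powr_inverse[OF assms] by simp
qed

lemma tendsto_enn_powr_minus:
  assumes "r > 0" and "\<epsilon> \<longlonglongrightarrow> 0" and "\<And>k. \<epsilon> k \<ge> 0"
  shows "(\<lambda>k. enn_powr (t - ennreal (\<epsilon> k)) r) \<longlonglongrightarrow> enn_powr t r"
proof (cases t)
  case (real c)
  have "(\<lambda>k. max (c - \<epsilon> k) 0 powr r) \<longlonglongrightarrow> max (c - 0) 0 powr r"
    using assms by (intro tendsto_intros) auto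
  moreover have "enn_powr (t - ennreal (\<epsilon> k)) r = ennreal (max (c - \<epsilon> k) 0 powr r)" for k
    using real assms(3)[of k] by (cases "\<epsilon> k \<le> c") (auto simp: enn_powr_def ennreal_minus_if ennreal_neg)
  ultimately show ?thesis
    using real by (simp add: enn_powr_def tendsto_ennrealI)
qed simp

lemma enn2real_exponent_ge_1:
  assumes "1 \<le> p" "p \<noteq> \<infinity>"
  shows "1 \<le> enn2real p"
  using assms by (cases p) (auto simp flip: ennreal_1 simp: ennreal_le_iff)

lemma sum_le_nn_integral_count_space:
  fixes f :: "'b \<Rightarrow> ennreal"
  assumes "finite E"
  shows "(\<Sum>x\<in>E. f x) \<le> (\<integral>\<^sup>+x. f x \<partial>count_space UNIV)"
proof -
  have "(\<Sum>x\<in>E. f x) = (\<integral>\<^sup>+x. f x \<partial>count_space E)"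
    using assms by (simp add: nn_integral_count_space_finite)
  also have "\<dots> = (\<integral>\<^sup>+x. f x * indicator E x \<partial>count_space UNIV)"
    by (simp add: nn_integral_count_space_indicator)
  also have "\<dots> \<le> (\<integral>\<^sup>+x. f x \<partial>count_space UNIV)"
    by (intro nn_integral_mono) (auto split: split_indicator)
  finally show ?thesis .
qed

lemma nn_integral_count_space_le_finite_sums:
  fixes g :: "'b \<Rightarrow> ennreal"
  assumes "countable {x. g x \<noteq> 0}" and "\<And>E. finite E \<Longrightarrow> (\<Sum>x\<in>E. g x) \<le> C"
  shows "(\<integral>\<^sup>+x. g x \<partial>count_space UNIV) \<le> C"
proof -
  define S where "S = {x. g x \<noteq> 0}"
  have restrict: "(\<integral>\<^sup>+x. g x \<partial>count_space UNIV) = (\<integral>\<^sup>+x. g x \<partial>count_space S)"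
    by (auto simp: nn_integral_count_space_indicator S_def split: split_indicator
             intro!: nn_integral_cong)
  show ?thesis
  proof (cases "finite S")
    case True
    then show ?thesis
      using restrict assms(2) by (simp add: nn_integral_count_space_finite)
  next
    case False
    have bij: "bij_betw (from_nat_into S) UNIV S"
      using assms(1) False by (simp add: S_def bij_betw_from_nat_into)
    have "(\<integral>\<^sup>+x. g x \<partial>count_space S) = (\<integral>\<^sup>+n. g (from_nat_into S n) \<partial>count_space UNIV)"
      using nn_integral_bij_count_space[OF bij, of g] by simp
    also have "\<dots> = (SUP n. \<Sum>i<n. g (from_nat_into S i))"
      by (simp add: nn_integral_count_space_nat suminf_eq_SUP)
    also have "\<dots> \<le> C"
    proof (rule SUP_least)
      fix n
      have "inj_on (from_nat_into S) {..<n}"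
        using bij by (auto simp: bij_betw_def inj_on_def)
      then show "(\<Sum>i<n. g (from_nat_into S i)) \<le> C"
        using assms(2)[of "from_nat_into S ` {..<n}"] by (simp add: sum.reindex)
    qed
    finally show ?thesis
      using restrict by simp
  qed
qed

lemma finite_level_set_if_nn_integral_count_space_finite:
  fixes f :: "'b \<Rightarrow> ennreal"
  assumes "(\<integral>\<^sup>+x. f x \<partial>count_space UNIV) < \<infinity>" and "c > 0"
  shows "finite {x. c \<le> f x}"
proof (rule ccontr)
  assume infinite: "infinite {x. c \<le> f x}"
  obtain i where i: "(\<integral>\<^sup>+x. f x \<partial>count_space UNIV) = ennreal i" "0 \<le> i"
    using assms(1) by (cases "\<integral>\<^sup>+x. f x \<partial>count_space UNIV") auto
  have "0 < min c 1" "min c 1 < top"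
    using assms(2) by (auto simp: min_less_iff_disj)
  then obtain c0 where c0: "min c 1 = ennreal c0" "c0 > 0"
    by (cases "min c 1") auto
  obtain n :: nat where n: "i < real n * c0"
    using c0(2) reals_Archimedean3 by blast
  obtain F where F: "finite F" "F \<subseteq> {x. c \<le> f x}" "card F = n"
    using infinite_arbitrarily_large[OF infinite] by blast
  have "ennreal (real n * c0) = of_nat n * min c 1"
    using c0 by (simp add: ennreal_mult ennreal_of_nat_eq_real_of_nat)
  also have "\<dots> \<le> (\<Sum>x\<in>F. f x)"
    using F by (intro order_trans[OF _ sum_mono[of F "\<lambda>_. c" f]]) (auto intro: mult_left_mono)
  also have "\<dots> \<le> ennreal i"
    using sum_le_nn_integral_count_space[OF F(1), of f] i(1) by simp
  finally show False
    using n i(2) by (simp add: ennreal_le_iff)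
qed

lemma dsize_less_top_iff: "dsize \<alpha> < \<infinity> \<longleftrightarrow> finite {x. \<alpha> x \<noteq> 0}"
proof
  assume "dsize \<alpha> < \<infinity>"
  then have "finite {x. 1 \<le> (of_nat (\<alpha> x) :: ennreal)}"
    unfolding dsize_def by (rule finite_level_set_if_nn_integral_count_space_finite) simp
  moreover have "{x. 1 \<le> (of_nat (\<alpha> x) :: ennreal)} = {x. \<alpha> x \<noteq> 0}"
    by (auto simp: Suc_le_eq)
  ultimately show "finite {x. \<alpha> x \<noteq> 0}"
    by simp
next
  assume "finite {x. \<alpha> x \<noteq> 0}"
  then have "dsize \<alpha> = (\<Sum>x | \<alpha> x \<noteq> 0. of_nat (\<alpha> x))"
    unfolding dsize_def by (rule nn_integral_count_space') auto
  also have "\<dots> = of_nat (\<Sum>x | \<alpha> x \<noteq> 0. \<alpha> x)"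
    by simp
  finally show "dsize \<alpha> < \<infinity>"
    by (simp del: of_nat_sum add: of_nat_less_top)
qed

section \<open>Distance to A, costs and Wasserstein distances\<close>

lemma setdist_le_dist: "a \<in> A \<Longrightarrow> setdist d x A \<le> d x a"
  unfolding setdist_def by (rule INF_lower)

lemma setdist_triangle:
  assumes "emetric d"
  shows "setdist d u A \<le> d u w + setdist d w A"
proof (rule ennreal_le_epsilon)
  fix e :: real
  assume finite: "d u w + setdist d w A < top" and e: "0 < e"
  then have "setdist d w A < top"
    by (simp add: less_top)
  then have "setdist d w A < setdist d w A + ennreal e"
    using e by (cases "setdist d w A") (auto simp flip: ennreal_plus simp: ennreal_less_iff)
  then obtain a where a: "a \<in> A" "d w a < setdist d w A + ennreal e"
    unfolding setdist_def by (auto simp: INF_less_iff)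
  have "setdist d u A \<le> d u a"
    by (rule setdist_le_dist[OF a(1)])
  also have "\<dots> \<le> d u w + d w a"
    using assms unfolding emetric_def by blast
  also have "\<dots> \<le> d u w + (setdist d w A + ennreal e)"
    using a(2) by (intro add_left_mono) simp
  finally show "setdist d u A \<le> d u w + setdist d w A + ennreal e"
    by (simp add: add.assoc)
qed

definition nearest :: "('a \<Rightarrow> 'a \<Rightarrow> ennreal) \<Rightarrow> 'a set \<Rightarrow> 'a \<Rightarrow> 'a" where
  "nearest d A x = (SOME a. a \<in> A \<and> d x a = setdist d x A)"

lemma nearest:
  assumes "dist_minimizing d A" and "setdist d x A < \<infinity>"
  shows "nearest d A x \<in> A" and "d x (nearest d A x) = setdist d x A"
proof -
  have "\<exists>a. a \<in> A \<and> d x a = setdist d x A"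
    using assms unfolding dist_minimizing_def by force
  then have "nearest d A x \<in> A \<and> d x (nearest d A x) = setdist d x A"
    unfolding nearest_def by (rule someI_ex)
  then show "nearest d A x \<in> A" and "d x (nearest d A x) = setdist d x A"
    by auto
qed

lemma dist_le_Cost:
  assumes "1 \<le> p" and "\<sigma> q \<noteq> 0"
  shows "d (fst q) (snd q) \<le> Cost d p \<sigma>"
proof (cases "p = \<infinity>")
  case True
  then show ?thesis
    using assms(2) unfolding Cost_def by (auto intro!: SUP_upper)
next
  case False
  define r where "r = enn2real p"
  have r: "r \<ge> 1"
    using enn2real_exponent_ge_1[OF assms(1) False] by (simp add: r_def)
  have "enn_powr (d (fst q) (snd q)) r \<le> of_nat (\<sigma> q) * enn_powr (d (fst q) (snd q)) r"
    using assms(2) by (cases "\<sigma> q") (auto simp: distrib_right)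
  also have "\<dots> \<le> (\<integral>\<^sup>+q'. of_nat (\<sigma> q') * enn_powr (d (fst q') (snd q')) r \<partial>count_space UNIV)"
    using sum_le_nn_integral_count_space[of "{q}"] by simp
  finally have "enn_powr (enn_powr (d (fst q) (snd q)) r) (1 / r) \<le> Cost d p \<sigma>"
    unfolding Cost_def using False r by (simp add: r_def enn_powr_mono)
  then show ?thesis
    using enn_powr_powr_inverse[of r] r by simp
qed

lemma Cost_le_iff:
  assumes "1 \<le> p" and "p \<noteq> \<infinity>"
  shows "Cost d p \<sigma> \<le> c \<longleftrightarrow>
    (\<integral>\<^sup>+q. of_nat (\<sigma> q) * enn_powr (d (fst q) (snd q)) (enn2real p) \<partial>count_space UNIV)
      \<le> enn_powr c (enn2real p)"
  using enn2real_exponent_ge_1[OF assms] assms(2)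
  by (simp add: Cost_def enn_powr_inverse_le_iff)

lemma Cost_zero [simp]: "Cost d p (\<lambda>_. 0) = 0"
  by (simp add: Cost_def bot_ennreal)

lemma Cost_indicator_le:
  assumes "1 \<le> p"
  shows "Cost d p (indicator {q}) \<le> d (fst q) (snd q)"
proof (cases "p = \<infinity>")
  case True
  have "{q'. indicator {q} q' \<noteq> (0 :: nat)} = {q}"
    by (auto split: split_indicator)
  then show ?thesis
    using True unfolding Cost_def by simp
next
  case False
  have "(\<integral>\<^sup>+q'. of_nat (indicator {q} q' :: nat) * enn_powr (d (fst q') (snd q')) (enn2real p)
      \<partial>count_space UNIV) = enn_powr (d (fst q) (snd q)) (enn2real p)"
    by (subst nn_integral_count_space'[of "{q}"]) (auto split: split_indicator)
  then show ?thesis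
    using Cost_le_iff[OF assms False, of d "indicator {q}"] by simp
qed

lemma Cost_swap:
  assumes "emetric d"
  shows "Cost d p (\<lambda>q. \<sigma> (prod.swap q)) = Cost d p \<sigma>"
proof -
  have sym: "d x y = d y x" for x y
    using assms unfolding emetric_def by blast
  have "{q. \<sigma> (prod.swap q) \<noteq> 0} = prod.swap ` {q. \<sigma> q \<noteq> 0}"
    by (auto simp: image_iff)
  then have sup: "(SUP q\<in>{q. \<sigma> (prod.swap q) \<noteq> 0}. d (fst q) (snd q))
      = (SUP q\<in>{q. \<sigma> q \<noteq> 0}. d (fst q) (snd q))"
    using sym by (simp add: image_image case_prod_beta)
  have "(\<integral>\<^sup>+q. of_nat (\<sigma> (prod.swap q)) * enn_powr (d (fst q) (snd q)) t \<partial>count_space UNIV)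
      = (\<integral>\<^sup>+q. of_nat (\<sigma> q) * enn_powr (d (fst q) (snd q)) t \<partial>count_space UNIV)" for t
    using nn_integral_bij_count_space[of prod.swap UNIV UNIV
        "\<lambda>q. of_nat (\<sigma> q) * enn_powr (d (fst q) (snd q)) t"] sym
    by simp
  with sup show ?thesis
    unfolding Cost_def by simp
qed

lemma sum_weighted_dist_le_Cost:
  assumes "1 \<le> p" and "p \<noteq> \<infinity>" and "finite Q" and "Cost d p \<sigma> \<le> c"
  shows "(\<Sum>q\<in>Q. of_nat (\<sigma> q) * enn_powr (d (fst q) (snd q)) (enn2real p)) \<le> enn_powr c (enn2real p)"
  using sum_le_nn_integral_count_space[OF assms(3)] Cost_le_iff[OF assms(1,2)] assms(4)
  by (blast intro: order_trans)

lemma Wp_le_Cost: "is_matching A \<alpha> \<beta> \<sigma> \<Longrightarrow> Wp d A p \<alpha> \<beta> \<le> Cost d p \<sigma>"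
  unfolding Wp_def by (rule INF_lower) simp

lemma Wp_approx:
  assumes "Wp d A p \<alpha> \<beta> < \<infinity>" and "e > 0"
  obtains \<sigma> where "is_matching A \<alpha> \<beta> \<sigma>" and "Cost d p \<sigma> \<le> Wp d A p \<alpha> \<beta> + ennreal e"
proof -
  have "Wp d A p \<alpha> \<beta> < Wp d A p \<alpha> \<beta> + ennreal e"
    using assms by (cases "Wp d A p \<alpha> \<beta>") (auto simp flip: ennreal_plus simp: ennreal_less_iff)
  then show ?thesis
    using that unfolding Wp_def by (auto simp: INF_less_iff intro: less_imp_le)
qed

lemma ex_minimizing_matchings:
  assumes "Wp d A p \<alpha> \<beta> < \<infinity>"
  obtains s where "\<And>n. is_matching A \<alpha> \<beta> (s n)"
    and "\<And>n. Cost d p (s n) \<le> Wp d A p \<alpha> \<beta> + ennreal (1 / Suc n)"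
proof -
  have "\<exists>\<sigma>. is_matching A \<alpha> \<beta> \<sigma> \<and> Cost d p \<sigma> \<le> Wp d A p \<alpha> \<beta> + ennreal (1 / Suc n)" for n
    using Wp_approx[OF assms, of "1 / Suc n"] by (metis of_nat_0_less_iff zero_less_Suc zero_less_divide_1_iff)
  then show ?thesis
    using that by metis
qed

section \<open>Matchings as couplings\<close>

definition has_row_sum :: "('a \<times> 'b \<Rightarrow> nat) \<Rightarrow> 'a \<Rightarrow> nat \<Rightarrow> bool" where
  "has_row_sum \<sigma> u n \<longleftrightarrow> finite {v. \<sigma> (u, v) \<noteq> 0} \<and> (\<Sum>v | \<sigma> (u, v) \<noteq> 0. \<sigma> (u, v)) = n"

lemma has_row_sum_iff:
  assumes "finite R" and "{v. \<sigma> (u, v) \<noteq> 0} \<subseteq> R"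
  shows "has_row_sum \<sigma> u n \<longleftrightarrow> (\<Sum>v\<in>R. \<sigma> (u, v)) = n"
proof -
  have "(\<Sum>v | \<sigma> (u, v) \<noteq> 0. \<sigma> (u, v)) = (\<Sum>v\<in>R. \<sigma> (u, v))"
    using assms by (intro sum.mono_neutral_left) auto
  then show ?thesis
    using finite_subset[OF assms(2,1)] by (simp add: has_row_sum_def)
qed

lemma has_row_sum_add:
  assumes "has_row_sum \<sigma> u a" and "has_row_sum \<tau> u b"
  shows "has_row_sum (\<lambda>q. \<sigma> q + \<tau> q) u (a + b)"
proof -
  define R where "R = {v. \<sigma> (u, v) \<noteq> 0} \<union> {v. \<tau> (u, v) \<noteq> 0}"
  have R: "finite R"
    using assms by (simp add: R_def has_row_sum_def)
  have "(\<Sum>v\<in>R. \<sigma> (u, v)) = a" "(\<Sum>v\<in>R. \<tau> (u, v)) = b"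
    using assms has_row_sum_iff[OF R, of \<sigma> u a] has_row_sum_iff[OF R, of \<tau> u b]
    by (auto simp: R_def)
  then show ?thesis
    using has_row_sum_iff[OF R, of "\<lambda>q. \<sigma> q + \<tau> q" u "a + b"]
    by (auto simp: R_def sum.distrib)
qed

lemma has_row_sum_sum_le:
  assumes "has_row_sum \<sigma> u n" and "finite F"
  shows "(\<Sum>v\<in>F. \<sigma> (u, v)) \<le> n"
proof -
  define R where "R = {v. \<sigma> (u, v) \<noteq> 0}"
  have "finite R" "(\<Sum>v\<in>R. \<sigma> (u, v)) = n"
    using assms(1) by (simp_all add: has_row_sum_def R_def)
  moreover have "(\<Sum>v\<in>F. \<sigma> (u, v)) = (\<Sum>v\<in>F \<inter> R. \<sigma> (u, v))"
    using assms(2) by (intro sum.mono_neutral_right) (auto simp: R_def)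
  ultimately show ?thesis
    by (metis inf_le2 sum_mono2 zero_le)
qed

lemma has_row_sum_unique: "has_row_sum \<sigma> u a \<Longrightarrow> has_row_sum \<sigma> u b \<Longrightarrow> a = b"
  by (simp add: has_row_sum_def)

lemma has_row_sum_le: "has_row_sum \<sigma> u n \<Longrightarrow> \<sigma> (u, v) \<le> n"
  using has_row_sum_sum_le[of \<sigma> u n "{v}"] by simp

lemma has_row_sum_count:
  assumes "\<And>q. finite {l\<in>L. e l = q}"
  shows "has_row_sum (\<lambda>q. card {l\<in>L. e l = q}) u n \<longleftrightarrow>
    finite {l\<in>L. fst (e l) = u} \<and> card {l\<in>L. fst (e l) = u} = n"
proof -
  define F where "F = {l\<in>L. fst (e l) = u}"
  have fibre: "{l\<in>L. e l = (u, v)} = {l\<in>F. snd (e l) = v}" for v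
    by (auto simp: F_def prod_eq_iff)
  have "has_row_sum (\<lambda>q. card {l\<in>L. e l = q}) u (card F)" if "finite F"
  proof -
    have "{v. card {l\<in>L. e l = (u, v)} \<noteq> 0} \<subseteq> (\<lambda>l. snd (e l)) ` F"
      by (auto simp: fibre card_gt_0_iff)
    moreover have "(\<Sum>v\<in>(\<lambda>l. snd (e l)) ` F. card {l\<in>F. snd (e l) = v}) = card F"
      using sum.group[of F "(\<lambda>l. snd (e l)) ` F" "\<lambda>l. snd (e l)" "\<lambda>_. 1 :: nat"] that by simp
    ultimately show ?thesis
      using has_row_sum_iff[of "(\<lambda>l. snd (e l)) ` F" "\<lambda>q. card {l\<in>L. e l = q}" u "card F"] that
      by (simp add: fibre)
  qed
  moreover have "finite F" if "has_row_sum (\<lambda>q. card {l\<in>L. e l = q}) u n"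
  proof (rule finite_subset)
    show "F \<subseteq> (\<Union>v\<in>{v. card {l\<in>L. e l = (u, v)} \<noteq> 0}. {l\<in>L. e l = (u, v)})"
      using assms by (fastforce simp: F_def prod_eq_iff card_eq_0_iff)
    show "finite \<dots>"
      using that assms by (simp add: has_row_sum_def)
  qed
  ultimately show ?thesis
    unfolding F_def[symmetric] by (metis has_row_sum_unique)
qed

lemma has_row_sum_countI:
  assumes "\<And>q. finite {l\<in>L. e l = q}" and "finite {l\<in>L. fst (e l) = u}"
    and "card {l\<in>L. fst (e l) = u} = n"
  shows "has_row_sum (\<lambda>q. card {l\<in>L. e l = q}) u n"
  unfolding has_row_sum_count[OF assms(1)] using assms(2,3) by simp

definition coupling :: "'a set \<Rightarrow> ('a \<Rightarrow> nat) \<Rightarrow> ('a \<Rightarrow> nat) \<Rightarrow> ('a \<times> 'a \<Rightarrow> nat) \<Rightarrow> bool" where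
  "coupling A \<alpha> \<beta> \<sigma> \<longleftrightarrow> (\<forall>u\<in>A. \<forall>v\<in>A. \<sigma> (u, v) = 0) \<and> countable {q. \<sigma> q \<noteq> 0} \<and>
     (\<forall>u. u \<notin> A \<longrightarrow> has_row_sum \<sigma> u (\<alpha> u)) \<and>
     (\<forall>v. v \<notin> A \<longrightarrow> has_row_sum (\<lambda>q. \<sigma> (prod.swap q)) v (\<beta> v))"

lemma coupling_swap:
  assumes "coupling A \<alpha> \<beta> \<sigma>"
  shows "coupling A \<beta> \<alpha> (\<lambda>q. \<sigma> (prod.swap q))"
proof -
  have "{q. \<sigma> (prod.swap q) \<noteq> 0} = prod.swap ` {q. \<sigma> q \<noteq> 0}"
    by (auto simp: image_iff)
  then show ?thesis
    using assms by (simp add: coupling_def)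
qed

lemma coupling_in_dgm: "coupling A \<alpha> \<beta> \<sigma> \<Longrightarrow> \<sigma> \<in> dgm (A \<times> A)"
  by (auto simp: coupling_def dgm_def)

locale matching_witness =
  fixes A :: "'a set" and \<alpha> \<beta> :: "'a \<Rightarrow> nat" and I J K :: "nat set"
    and x y z w :: "nat \<Rightarrow> 'a" and \<phi> :: "nat \<Rightarrow> nat"
  assumes fsum_\<alpha>: "is_fsum A \<alpha> I x" and fsum_\<beta>: "is_fsum A \<beta> J y"
    and K: "K \<subseteq> I" "inj_on \<phi> K" "\<phi> ` K \<subseteq> J"
    and z: "\<forall>i\<in>I - K. z i \<in> A" and w: "\<forall>j\<in>J - \<phi> ` K. w j \<in> A"
begin

definition matching :: "'a \<times> 'a \<Rightarrow> nat" where
  "matching = (\<lambda>q. card {k\<in>K. (x k, y (\<phi> k)) = q} + card {i\<in>I - K. (x i, z i) = q}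
     + card {j\<in>J - \<phi> ` K. (w j, y j) = q})"

lemma x_notin_A: "i \<in> I \<Longrightarrow> x i \<notin> A" and finite_x_fibre: "finite {i\<in>I. x i = u}"
  and \<alpha>_eq_card: "\<alpha> u = card {i\<in>I. x i = u}"
  using fsum_\<alpha> by (auto simp: is_fsum_def)

lemma y_notin_A: "j \<in> J \<Longrightarrow> y j \<notin> A" and finite_y_fibre: "finite {j\<in>J. y j = v}"
  and \<beta>_eq_card: "\<beta> v = card {j\<in>J. y j = v}"
  using fsum_\<beta> by (auto simp: is_fsum_def)

lemma finite_fibres:
  "finite {k\<in>K. (x k, y (\<phi> k)) = q}" "finite {k\<in>K. (y (\<phi> k), x k) = q}"
  "finite {i\<in>I - K. (x i, z i) = q}" "finite {i\<in>I - K. (z i, x i) = q}"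
  "finite {j\<in>J - \<phi> ` K. (w j, y j) = q}" "finite {j\<in>J - \<phi> ` K. (y j, w j) = q}"
  using K(1) by (auto intro: finite_subset[OF _ finite_x_fibre[of "fst q"]] finite_subset[OF _ finite_x_fibre[of "snd q"]]
      finite_subset[OF _ finite_y_fibre[of "snd q"]] finite_subset[OF _ finite_y_fibre[of "fst q"]])

lemma matching_vanishes: "u \<in> A \<Longrightarrow> v \<in> A \<Longrightarrow> matching (u, v) = 0"
proof -
  assume "u \<in> A" "v \<in> A"
  then have "{k\<in>K. (x k, y (\<phi> k)) = (u, v)} = {}" "{i\<in>I - K. (x i, z i) = (u, v)} = {}"
    "{j\<in>J - \<phi> ` K. (w j, y j) = (u, v)} = {}"
    using K(1) x_notin_A y_notin_A by auto
  then show ?thesis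
    by (simp only: matching_def card.empty add_0)
qed

lemma countable_matching_support: "countable {q. matching q \<noteq> 0}"
proof (rule countable_subset)
  show "{q. matching q \<noteq> 0} \<subseteq>
      (\<lambda>k. (x k, y (\<phi> k))) ` K \<union> (\<lambda>i. (x i, z i)) ` (I - K) \<union> (\<lambda>j. (w j, y j)) ` (J - \<phi> ` K)"
    by (auto simp: matching_def card_gt_0_iff)
qed auto

lemma matching_row_sum:
  assumes "u \<notin> A"
  shows "has_row_sum matching u (\<alpha> u)"
proof -
  have no_w: "{j\<in>J - \<phi> ` K. w j = u} = {}"
    using w assms by auto
  have fin: "finite {k\<in>K. x k = u}" "finite {i\<in>I - K. x i = u}"
    using K(1) by (auto intro: finite_subset[OF _ finite_x_fibre[of u]])
  have "{i\<in>I. x i = u} = {k\<in>K. x k = u} \<union> {i\<in>I - K. x i = u}"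
    using K(1) by auto
  then have "\<alpha> u = card {k\<in>K. x k = u} + card {i\<in>I - K. x i = u} + 0"
    using fin by (simp add: \<alpha>_eq_card) (subst card_Un_disjoint; auto)
  also have "has_row_sum matching u \<dots>"
    unfolding matching_def
    by (intro has_row_sum_add has_row_sum_countI finite_fibres)
      (use fin no_w in \<open>simp_all only: fst_conv snd_conv card.empty finite.emptyI\<close>)
  finally show ?thesis .
qed

lemma matching_col_sum:
  assumes "v \<notin> A"
  shows "has_row_sum (\<lambda>q. matching (prod.swap q)) v (\<beta> v)"
proof -
  have swap_eq: "(a = prod.swap q) \<longleftrightarrow> (prod.swap a = q)" for a q :: "'a \<times> 'a"
    by auto
  have no_z: "{i\<in>I - K. z i = v} = {}"
    using z assms by auto
  have fin: "finite {j\<in>\<phi> ` K. y j = v}" "finite {j\<in>J - \<phi> ` K. y j = v}"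
    using K(3) by (auto intro: finite_subset[OF _ finite_y_fibre[of v]])
  have inj: "inj_on \<phi> {k\<in>K. y (\<phi> k) = v}"
    using K(2) by (rule inj_on_subset) auto
  have img: "\<phi> ` {k\<in>K. y (\<phi> k) = v} = {j\<in>\<phi> ` K. y j = v}"
    by auto
  then have reindex: "card {k\<in>K. y (\<phi> k) = v} = card {j\<in>\<phi> ` K. y j = v}"
    using card_image[OF inj] by simp
  have fin_K: "finite {k\<in>K. y (\<phi> k) = v}"
    using finite_imageD[OF _ inj] img fin(1) by simp
  have "{j\<in>J. y j = v} = {j\<in>\<phi> ` K. y j = v} \<union> {j\<in>J - \<phi> ` K. y j = v}"
    using K(3) by auto
  then have "\<beta> v = card {k\<in>K. y (\<phi> k) = v} + 0 + card {j\<in>J - \<phi> ` K. y j = v}"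
    using fin by (simp add: \<beta>_eq_card reindex) (subst card_Un_disjoint; auto)
  also have "has_row_sum (\<lambda>q. matching (prod.swap q)) v \<dots>"
    unfolding matching_def swap_eq swap_simp
    by (intro has_row_sum_add has_row_sum_countI finite_fibres)
      (use fin_K fin(2) no_z in \<open>simp_all only: fst_conv snd_conv card.empty finite.emptyI\<close>)
  finally show ?thesis .
qed

lemma coupling_matching: "coupling A \<alpha> \<beta> matching"
  unfolding coupling_def
  using matching_vanishes countable_matching_support matching_row_sum matching_col_sum by blast

end

lemma coupling_if_matching:
  assumes "is_matching A \<alpha> \<beta> \<sigma>"
  shows "coupling A \<alpha> \<beta> \<sigma>"
proof -
  obtain I x J y K \<phi> z w where witness: "matching_witness A \<alpha> \<beta> I J K x y z w \<phi>"
    and \<sigma>: "\<sigma> = (\<lambda>q. card {k\<in>K. (x k, y (\<phi> k)) = q} + card {i\<in>I - K. (x i, z i) = q}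
                 + card {j\<in>J - \<phi> ` K. (w j, y j) = q})"
    using assms unfolding is_matching_def matching_witness_def by blast
  interpret matching_witness A \<alpha> \<beta> I J K x y z w \<phi>
    by (rule witness)
  show ?thesis
    using coupling_matching by (simp add: \<sigma> matching_def)
qed

lemma ex_nat_enumeration:
  fixes f :: "'b \<Rightarrow> nat"
  assumes "countable {q. f q \<noteq> 0}"
  obtains L :: "nat set" and e where "\<And>l. l \<in> L \<Longrightarrow> f (e l) \<noteq> 0"
    and "\<And>q. finite {l\<in>L. e l = q}" and "\<And>q. card {l\<in>L. e l = q} = f q"
proof -
  define P where "P = Sigma {q. f q \<noteq> 0} (\<lambda>q. {..<f q})"
  have "countable P"
    unfolding P_def using assms by (intro countable_SIGMA) auto
  then have inj: "inj_on (to_nat_on P) P"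
    by (rule inj_on_to_nat_on)
  define e where "e l = fst (from_nat_into P l)" for l
  have e: "e (to_nat_on P p) = fst p" if "p \<in> P" for p
    using from_nat_into_to_nat_on[OF \<open>countable P\<close> that] by (simp add: e_def)
  have fibre: "{l\<in>to_nat_on P ` P. e l = q} = to_nat_on P ` ({q} \<times> {..<f q})" for q
    using e by (force simp: P_def)
  show ?thesis
  proof
    show "f (e l) \<noteq> 0" if "l \<in> to_nat_on P ` P" for l
      using that e by (auto simp: P_def)
    show "finite {l\<in>to_nat_on P ` P. e l = q}" for q
      by (simp add: fibre)
    have "inj_on (to_nat_on P) ({q} \<times> {..<f q})" for q
      using inj by (rule inj_on_subset) (auto simp: P_def)
    then show "card {l\<in>to_nat_on P ` P. e l = q} = f q" for q
      by (simp add: fibre card_image card_cartesian_product)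
  qed
qed

lemma is_fsum_if_has_row_sums:
  assumes "\<alpha> \<in> dgm A" and "\<And>q. finite {l\<in>L. e l = q}"
    and "\<And>u. u \<notin> A \<Longrightarrow> has_row_sum (\<lambda>q. card {l\<in>L. e l = q}) u (\<alpha> u)"
  shows "is_fsum A \<alpha> {l\<in>L. fst (e l) \<notin> A} (\<lambda>l. fst (e l))"
proof -
  have "finite {i\<in>{l\<in>L. fst (e l) \<notin> A}. fst (e i) = u} \<and>
      \<alpha> u = card {i\<in>{l\<in>L. fst (e l) \<notin> A}. fst (e i) = u}" for u
  proof (cases "u \<in> A")
    case True
    then have "{i\<in>{l\<in>L. fst (e l) \<notin> A}. fst (e i) = u} = {}" "\<alpha> u = 0"
      using assms(1) by (auto simp: dgm_def)
    then show ?thesis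
      by (metis card.empty finite.emptyI)
  next
    case False
    then have "{i\<in>{l\<in>L. fst (e l) \<notin> A}. fst (e i) = u} = {l\<in>L. fst (e l) = u}"
      by auto
    then show ?thesis
      using assms(3)[OF False] has_row_sum_count[OF assms(2)] by simp
  qed
  then show ?thesis
    unfolding is_fsum_def by auto
qed

lemma card_Un_three_parts:
  assumes "finite {l\<in>I \<union> J. P l}"
  shows "card {l\<in>I \<union> J. P l} = card {l\<in>I \<inter> J. P l} + card {l\<in>I - I \<inter> J. P l} + card {l\<in>J - I \<inter> J. P l}"
proof -
  have "{l\<in>I \<union> J. P l} = ({l\<in>I \<inter> J. P l} \<union> {l\<in>I - I \<inter> J. P l}) \<union> {l\<in>J - I \<inter> J. P l}"
    by auto
  moreover have "finite {l\<in>I \<inter> J. P l}" "finite {l\<in>I - I \<inter> J. P l}" "finite {l\<in>J - I \<inter> J. P l}"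
    using assms by (auto elim: finite_subset[rotated])
  ultimately show ?thesis
    by (simp add: card_Un_disjoint disjoint_iff)
qed

lemma matching_if_coupling:
  assumes "\<alpha> \<in> dgm A" and "\<beta> \<in> dgm A" and "coupling A \<alpha> \<beta> \<sigma>"
  shows "is_matching A \<alpha> \<beta> \<sigma>"
proof -
  have countable: "countable {q. \<sigma> q \<noteq> 0}" and vanish: "\<And>u v. u \<in> A \<Longrightarrow> v \<in> A \<Longrightarrow> \<sigma> (u, v) = 0"
    using assms(3) by (auto simp: coupling_def)
  obtain L :: "nat set" and e where nonzero: "\<And>l. l \<in> L \<Longrightarrow> \<sigma> (e l) \<noteq> 0"
    and fin: "\<And>q. finite {l\<in>L. e l = q}" and card: "\<And>q. card {l\<in>L. e l = q} = \<sigma> q"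
    using ex_nat_enumeration[OF countable] by blast
  have \<sigma>: "\<sigma> = (\<lambda>q. card {l\<in>L. e l = q})"
    by (simp add: card)
  have swap_fibre: "{l\<in>L. prod.swap (e l) = q} = {l\<in>L. e l = prod.swap q}" for q
    by (rule Collect_cong) (metis swap_swap)
  then have swap: "(\<lambda>q. card {l\<in>L. prod.swap (e l) = q}) = (\<lambda>q. \<sigma> (prod.swap q))"
    by (simp add: \<sigma>)
  have fin_swap: "finite {l\<in>L. prod.swap (e l) = q}" for q
    using fin swap_fibre by simp
  define I where "I = {l\<in>L. fst (e l) \<notin> A}"
  define J where "J = {l\<in>L. fst (prod.swap (e l)) \<notin> A}"
  have I: "is_fsum A \<alpha> I (\<lambda>l. fst (e l))"
    unfolding I_def using assms(3)
    by (intro is_fsum_if_has_row_sums[OF assms(1) fin]) (simp add: coupling_def \<sigma>)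
  have J: "is_fsum A \<beta> J (\<lambda>l. fst (prod.swap (e l)))"
    unfolding J_def using assms(3)
    by (intro is_fsum_if_has_row_sums[OF assms(2) fin_swap]) (simp add: coupling_def swap)
  have "fst (e l) \<notin> A \<or> snd (e l) \<notin> A" if "l \<in> L" for l
    using nonzero[OF that] vanish[of "fst (e l)" "snd (e l)"] by auto
  then have L: "L = I \<union> J"
    by (auto simp: I_def J_def)
  have decomposition: "\<sigma> q = card {k\<in>I \<inter> J. (fst (e k), fst (prod.swap (e (id k)))) = q}
      + card {i\<in>I - I \<inter> J. (fst (e i), fst (prod.swap (e i))) = q}
      + card {j\<in>J - id ` (I \<inter> J). (fst (e j), fst (prod.swap (e j))) = q}" for q
    using card_Un_three_parts[of I J "\<lambda>l. e l = q"] fin[of q] by (simp add: L flip: card)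
  have unmatched: "\<forall>i\<in>I - I \<inter> J. fst (prod.swap (e i)) \<in> A" "\<forall>j\<in>J - id ` (I \<inter> J). fst (e j) \<in> A"
    by (auto simp: I_def J_def)
  show ?thesis
    unfolding is_matching_def
    by (intro exI[of _ I] exI[of _ "\<lambda>l. fst (e l)"] exI[of _ J] exI[of _ "\<lambda>l. fst (prod.swap (e l))"]
        exI[of _ "I \<inter> J"] exI[of _ id] exI[of _ "\<lambda>l. fst (prod.swap (e l))"] exI[of _ "\<lambda>l. fst (e l)"]
        conjI I J ext decomposition unmatched) simp_all
qed

section \<open>Diagrams of finite Wasserstein type\<close>

lemma Dp_subset_dgm: "Dp d A p \<subseteq> dgm A"
  by (auto simp: Dp_def)

lemma coupling_to_zero_partner:
  assumes "coupling A \<gamma> (\<lambda>_. 0) \<sigma>" and "u \<notin> A" and "\<gamma> u \<noteq> 0"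
  obtains v where "v \<in> A" and "\<sigma> (u, v) \<noteq> 0"
proof -
  have "has_row_sum \<sigma> u (\<gamma> u)"
    using assms(1,2) unfolding coupling_def by blast
  then have "{v. \<sigma> (u, v) \<noteq> 0} \<noteq> {}"
    using assms(3) unfolding has_row_sum_def by (metis sum.empty)
  then obtain v where v: "\<sigma> (u, v) \<noteq> 0"
    by blast
  have "v \<in> A"
  proof (rule ccontr)
    assume "v \<notin> A"
    then have "has_row_sum (\<lambda>q. \<sigma> (prod.swap q)) v 0"
      using assms(1) by (simp add: coupling_def)
    from has_row_sum_le[OF this, of u] show False
      using v by simp
  qed
  with v that show ?thesis
    by blast
qed

lemma finite_far_points_if_Cost_finite:
  assumes p: "1 \<le> p" "p \<noteq> \<infinity>" and \<sigma>: "coupling A \<gamma> (\<lambda>_. 0) \<sigma>" "Cost d p \<sigma> < \<infinity>"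
    and \<delta>: "\<delta> > 0"
  shows "finite {u. u \<notin> A \<and> \<gamma> u \<noteq> 0 \<and> \<delta> \<le> setdist d u A}"
proof -
  define r where "r = enn2real p"
  have r: "r \<ge> 1"
    using enn2real_exponent_ge_1[OF p] by (simp add: r_def)
  define f where "f q = of_nat (\<sigma> q) * enn_powr (d (fst q) (snd q)) r" for q
  have "(\<integral>\<^sup>+q. f q \<partial>count_space UNIV) \<le> enn_powr (Cost d p \<sigma>) r"
    using Cost_le_iff[OF p, of d \<sigma> "Cost d p \<sigma>"] by (simp add: f_def r_def)
  also have "\<dots> < \<infinity>"
    using \<sigma>(2) by (simp add: enn_powr_def)
  finally have Q: "finite {q. enn_powr \<delta> r \<le> f q}"
    using \<delta> r by (intro finite_level_set_if_nn_integral_count_space_finite enn_powr_pos) auto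
  have "u \<in> fst ` {q. enn_powr \<delta> r \<le> f q}" if u: "u \<notin> A" "\<gamma> u \<noteq> 0" "\<delta> \<le> setdist d u A" for u
  proof -
    obtain v where v: "v \<in> A" "\<sigma> (u, v) \<noteq> 0"
      using coupling_to_zero_partner[OF \<sigma>(1) u(1,2)] .
    then have "\<delta> \<le> d u v"
      by (intro order_trans[OF u(3) setdist_le_dist])
    then have "enn_powr \<delta> r \<le> enn_powr (d u v) r"
      using r by (intro enn_powr_mono) auto
    also have "\<dots> \<le> f (u, v)"
      using v(2) by (cases "\<sigma> (u, v)") (auto simp: f_def distrib_right)
    finally show ?thesis
      by (metis (mono_tags) fst_conv image_eqI mem_Collect_eq)
  qed
  then have "{u. u \<notin> A \<and> \<gamma> u \<noteq> 0 \<and> \<delta> \<le> setdist d u A} \<subseteq> fst ` {q. enn_powr \<delta> r \<le> f q}"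
    by blast
  then show ?thesis
    by (rule finite_surj[OF Q])
qed

lemma finite_support_upper_part:
  assumes "dsize (upper_part d A \<delta> \<alpha>) < \<infinity>"
  shows "finite {u. \<alpha> u \<noteq> 0 \<and> \<not> setdist d u A < \<delta>}"
proof -
  have "finite {u. upper_part d A \<delta> \<alpha> u \<noteq> 0}"
    using assms by (rule dsize_less_top_iff[THEN iffD1])
  moreover have "{u. upper_part d A \<delta> \<alpha> u \<noteq> 0} = {u. \<alpha> u \<noteq> 0 \<and> \<not> setdist d u A < \<delta>}"
    by (auto simp: upper_part_def restr_def thick_def)
  ultimately show ?thesis
    by simp
qed

lemma Dp_far_points_finite:
  assumes p: "1 \<le> p" and \<alpha>: "\<alpha> \<in> Dp d A p" and \<delta>: "(\<delta>::real) > 0"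
  shows "finite {u. \<alpha> u \<noteq> 0 \<and> ennreal \<delta> \<le> setdist d u A}"
proof (cases "p = \<infinity>")
  case True
  then have "dsize (upper_part d A (ennreal \<delta>) \<alpha>) < \<infinity>"
    using \<alpha> \<delta> by (simp add: Dp_def)
  then show ?thesis
    using finite_support_upper_part by (simp add: not_less)
next
  case False
  define \<gamma> where "\<gamma> = lower_part d A \<infinity> \<alpha>"
  have dgm: "\<alpha> \<in> dgm A" and upper: "dsize (upper_part d A \<infinity> \<alpha>) < \<infinity>"
    and lower: "Wp d A p \<gamma> (\<lambda>_. 0) < \<infinity>"
    using \<alpha> False by (auto simp: Dp_def \<gamma>_def)
  obtain \<sigma> where \<sigma>: "is_matching A \<gamma> (\<lambda>_. 0) \<sigma>" "Cost d p \<sigma> < \<infinity>"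
    using lower unfolding Wp_def by (auto simp: INF_less_iff)
  have off_A: "u \<notin> A" if "\<alpha> u \<noteq> 0" for u
    using that dgm by (auto simp: dgm_def)
  have \<gamma>: "\<gamma> u = \<alpha> u" if "u \<notin> A" "setdist d u A < \<infinity>" for u
    using that by (simp add: \<gamma>_def lower_part_def restr_def thick_def)
  have "{u. \<alpha> u \<noteq> 0 \<and> ennreal \<delta> \<le> setdist d u A} \<subseteq>
      {u. \<alpha> u \<noteq> 0 \<and> \<not> setdist d u A < \<infinity>} \<union> {u. u \<notin> A \<and> \<gamma> u \<noteq> 0 \<and> ennreal \<delta> \<le> setdist d u A}"
  proof
    fix u
    assume "u \<in> {u. \<alpha> u \<noteq> 0 \<and> ennreal \<delta> \<le> setdist d u A}"
    then show "u \<in> {u. \<alpha> u \<noteq> 0 \<and> \<not> setdist d u A < \<infinity>} \<union> {u. u \<notin> A \<and> \<gamma> u \<noteq> 0 \<and> ennreal \<delta> \<le> setdist d u A}"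
      using off_A[of u] \<gamma>[of u] by (cases "setdist d u A < \<infinity>") simp_all
  qed
  moreover have "finite {u. \<alpha> u \<noteq> 0 \<and> \<not> setdist d u A < \<infinity>}"
    using upper by (rule finite_support_upper_part)
  moreover have "finite {u. u \<notin> A \<and> \<gamma> u \<noteq> 0 \<and> ennreal \<delta> \<le> setdist d u A}"
    using p False coupling_if_matching[OF \<sigma>(1)] \<sigma>(2) \<delta>
    by (intro finite_far_points_if_Cost_finite) auto
  ultimately show ?thesis
    by (rule finite_subset[OF _ finite_UnI])
qed

lemma indicator_in_dgm: "x \<notin> A \<Longrightarrow> indicator {x} \<in> dgm A"
  unfolding dgm_def by (auto intro: countable_subset[of _ "{x}"] split: split_indicator)

lemma zero_in_dgm: "(\<lambda>_. 0) \<in> dgm A"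
  by (simp add: dgm_def)

lemma coupling_indicator:
  assumes "x \<notin> A" and "a \<in> A"
  shows "coupling A (indicator {x}) (\<lambda>_. 0) (indicator {(x, a)})"
  unfolding coupling_def
proof (intro conjI ballI allI impI)
  show "indicator {(x, a)} (u, v) = (0 :: nat)" if "u \<in> A" for u v
    using that assms(1) by (auto split: split_indicator)
  show "countable {q. indicator {(x, a)} q \<noteq> (0 :: nat)}"
    by (rule countable_subset[of _ "{(x, a)}"]) (auto split: split_indicator)
  show "has_row_sum (indicator {(x, a)}) u (indicator {x} u)" for u
    by (subst has_row_sum_iff[of "{a}"]) (auto split: split_indicator)
  show "has_row_sum (\<lambda>q. indicator {(x, a)} (prod.swap q)) v 0" if "v \<notin> A" for v
    using that assms(2) by (subst has_row_sum_iff[of "{}"]) (auto split: split_indicator)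
qed

lemma Wp_indicator_le_setdist:
  assumes "1 \<le> p" and "x \<notin> A"
  shows "Wp d A p (indicator {x}) (\<lambda>_. 0) \<le> setdist d x A"
  unfolding setdist_def
proof (rule INF_greatest)
  fix a
  assume "a \<in> A"
  from assms(2) this have "coupling A (indicator {x}) (\<lambda>_. 0) (indicator {(x, a)})"
    by (rule coupling_indicator)
  then have "is_matching A (indicator {x}) (\<lambda>_. 0) (indicator {(x, a)})"
    using indicator_in_dgm[OF assms(2)] zero_in_dgm by (rule matching_if_coupling[rotated 2])
  then have "Wp d A p (indicator {x}) (\<lambda>_. 0) \<le> Cost d p (indicator {(x, a)})"
    by (rule Wp_le_Cost)
  also have "\<dots> \<le> d x a"
    using Cost_indicator_le[OF assms(1), of d "(x, a)"] by simp
  finally show "Wp d A p (indicator {x}) (\<lambda>_. 0) \<le> d x a" .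
qed

lemma Wp_zero: "Wp d A p (\<lambda>_. 0) (\<lambda>_. 0) = 0"
proof -
  have "coupling A (\<lambda>_. 0) (\<lambda>_. 0) (\<lambda>_. 0)"
    by (simp add: coupling_def has_row_sum_def)
  then have "is_matching A (\<lambda>_. 0) (\<lambda>_. 0) (\<lambda>_. 0)"
    using zero_in_dgm zero_in_dgm by (rule matching_if_coupling[rotated 2])
  then show ?thesis
    using Wp_le_Cost[of A "\<lambda>_. 0" "\<lambda>_. 0" "\<lambda>_. 0" d p] by simp
qed

lemma Dp_if_finite_support:
  assumes "\<alpha> \<in> dgm A" and "finite {x. \<alpha> x \<noteq> 0}"
    and "p \<noteq> \<infinity> \<Longrightarrow> Wp d A p (lower_part d A \<infinity> \<alpha>) (\<lambda>_. 0) < \<infinity>"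
  shows "\<alpha> \<in> Dp d A p"
proof -
  have "{x. upper_part d A \<delta> \<alpha> x \<noteq> 0} \<subseteq> {x. \<alpha> x \<noteq> 0}" for \<delta>
    by (auto simp: upper_part_def restr_def)
  then have "dsize (upper_part d A \<delta> \<alpha>) < \<infinity>" for \<delta>
    using assms(2) finite_subset dsize_less_top_iff by blast
  then show ?thesis
    using assms(1,3) by (simp add: Dp_def)
qed

lemma indicator_in_Dp:
  assumes "1 \<le> p" and "x \<notin> A" and "setdist d x A < \<infinity>"
  shows "indicator {x} \<in> Dp d A p"
proof (rule Dp_if_finite_support)
  show "indicator {x} \<in> dgm A"
    using assms(2) by (rule indicator_in_dgm)
  show "finite {u. indicator {x} u \<noteq> (0 :: nat)}"
    by (rule finite_subset[of _ "{x}"]) (auto split: split_indicator)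
  have "lower_part d A \<infinity> (indicator {x}) = indicator {x}"
    using assms(2,3) by (auto simp: lower_part_def restr_def thick_def split: split_indicator)
  then show "Wp d A p (lower_part d A \<infinity> (indicator {x})) (\<lambda>_. 0) < \<infinity>"
    using Wp_indicator_le_setdist[OF assms(1,2), of d] assms(3) by simp
qed

lemma zero_in_Dp: "(\<lambda>_. 0) \<in> Dp d A p"
proof (rule Dp_if_finite_support)
  have "lower_part d A \<infinity> (\<lambda>_. 0) = (\<lambda>_. 0)"
    by (simp add: lower_part_def restr_def)
  then show "Wp d A p (lower_part d A \<infinity> (\<lambda>_. 0)) (\<lambda>_. 0) < \<infinity>"
    by (simp add: Wp_zero)
qed (simp_all add: zero_in_dgm)

section \<open>Limits of minimizing sequences of matchings\<close>

lemma bounded_nat_sequences_stabilize: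
  fixes f :: "nat \<Rightarrow> nat \<Rightarrow> nat" and b :: "nat \<Rightarrow> nat"
  assumes "\<And>n i. f n i \<le> b i"
  obtains r t where "strict_mono r" and "\<And>i. eventually (\<lambda>n. f (r n) i = t i) sequentially"
proof -
  define S where "S = PiE (UNIV :: nat set) (\<lambda>i. {0..real (b i)})"
  have "compactin (product_topology (\<lambda>i. euclidean) UNIV) S"
    unfolding S_def by (subst compactin_PiE) auto
  then have "seq_compact S"
    by (simp add: euclidean_product_topology compact_imp_seq_compact)
  moreover define g where "g n = (\<lambda>i. real (f n i))" for n
  have "g n \<in> S" for n
    using assms unfolding S_def g_def by auto
  ultimately obtain l r where r: "strict_mono r" and lim: "(g \<circ> r) \<longlonglongrightarrow> l"
    unfolding seq_compact_def by blast
  have "\<exists>t. eventually (\<lambda>n. f (r n) i = t) sequentially" for i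
  proof -
    have "((\<lambda>n. real (f (r n) i)) \<longlongrightarrow> l i) sequentially"
      using continuous_on_tendsto_compose[OF continuous_on_product_coordinates[of i] lim]
      by (simp add: g_def o_def)
    then have "eventually (\<lambda>n. dist (real (f (r n) i)) (l i) < 1 / 2) sequentially"
      by (rule tendstoD) simp
    then obtain N where N: "\<And>n. n \<ge> N \<Longrightarrow> \<bar>real (f (r n) i) - l i\<bar> < 1 / 2"
      by (auto simp: eventually_sequentially dist_real_def)
    have "f (r n) i = f (r N) i" if "n \<ge> N" for n
      using N[OF that] N[of N] by linarith
    then show ?thesis
      by (auto simp: eventually_sequentially)
  qed
  then obtain t where "\<And>i. eventually (\<lambda>n. f (r n) i = t i) sequentially"
    by metis
  with r that show ?thesis
    by blast
qed

locale minimizing_sequence =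
  fixes d :: "'a \<Rightarrow> 'a \<Rightarrow> ennreal" and A :: "'a set" and \<alpha> \<beta> :: "'a \<Rightarrow> nat"
    and s :: "nat \<Rightarrow> 'a \<times> 'a \<Rightarrow> nat" and p W :: ennreal
  assumes emetric: "emetric d"
    and dgm_\<alpha>: "\<alpha> \<in> dgm A" and dgm_\<beta>: "\<beta> \<in> dgm A"
    and far_\<alpha>: "\<And>\<delta>::real. \<delta> > 0 \<Longrightarrow> finite {u. \<alpha> u \<noteq> 0 \<and> ennreal \<delta> \<le> setdist d u A}"
    and far_\<beta>: "\<And>\<delta>::real. \<delta> > 0 \<Longrightarrow> finite {v. \<beta> v \<noteq> 0 \<and> ennreal \<delta> \<le> setdist d v A}"
    and coupling_s: "\<And>n. coupling A \<alpha> \<beta> (s n)"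
    and p: "1 \<le> p" and W_finite: "W < \<infinity>"
    and Cost_s: "\<And>n. Cost d p (s n) \<le> W + ennreal (1 / Suc n)"
begin

lemma \<alpha>_zero: "u \<in> A \<Longrightarrow> \<alpha> u = 0" and \<beta>_zero: "v \<in> A \<Longrightarrow> \<beta> v = 0"
  using dgm_\<alpha> dgm_\<beta> by (auto simp: dgm_def)

lemma d_sym: "d u v = d v u"
  using emetric by (simp add: emetric_def)

lemma s_row_sum: "u \<notin> A \<Longrightarrow> has_row_sum (s n) u (\<alpha> u)"
  and s_col_sum: "v \<notin> A \<Longrightarrow> has_row_sum (\<lambda>q. s n (prod.swap q)) v (\<beta> v)"
  using coupling_s[of n] by (auto simp: coupling_def)

lemma finite_row_support: "u \<notin> A \<Longrightarrow> finite {v. s n (u, v) \<noteq> 0}"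
  using s_row_sum[of u n] by (simp add: has_row_sum_def)

lemma s_le_\<alpha>: "u \<notin> A \<Longrightarrow> s n (u, v) \<le> \<alpha> u"
  and s_le_\<beta>: "v \<notin> A \<Longrightarrow> s n (u, v) \<le> \<beta> v"
  using has_row_sum_le[OF s_row_sum] has_row_sum_le[OF s_col_sum, of v n u] by auto

lemma s_bounded: "s n (u, v) \<le> (if u \<notin> A then \<alpha> u else \<beta> v)"
proof (cases "u \<in> A \<and> v \<in> A")
  case True
  then show ?thesis
    using coupling_s[of n] by (simp add: coupling_def)
qed (auto intro: s_le_\<alpha> s_le_\<beta>)

lemma ex_pointwise_limit:
  obtains r \<tau> where "strict_mono r" and "\<And>q. \<alpha> (fst q) = 0 \<or> \<beta> (snd q) = 0 \<Longrightarrow> \<tau> q = 0"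
    and "\<And>q. fst q \<notin> A \<Longrightarrow> snd q \<notin> A \<Longrightarrow> eventually (\<lambda>n. s (r n) q = \<tau> q) sequentially"
proof -
  define P where "P = {u. \<alpha> u \<noteq> 0} \<times> {v. \<beta> v \<noteq> 0}"
  have "countable P"
    using dgm_\<alpha> dgm_\<beta> by (simp add: P_def dgm_def)
  define e where "e = from_nat_into P"
  define b where "b k = (if fst (e k) \<notin> A then \<alpha> (fst (e k)) else \<beta> (snd (e k)))" for k
  have "s n (e k) \<le> b k" for n k
    using s_bounded[of n "fst (e k)" "snd (e k)"] by (simp add: b_def)
  then obtain r t where r: "strict_mono r" and t: "\<And>k. eventually (\<lambda>n. s (r n) (e k) = t k) sequentially"
    using bounded_nat_sequences_stabilize[of "\<lambda>n k. s n (e k)" b] by blast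
  define \<tau> where "\<tau> q = (if q \<in> P then t (to_nat_on P q) else 0)" for q
  show ?thesis
  proof
    show "strict_mono r"
      by (rule r)
    show "\<tau> q = 0" if "\<alpha> (fst q) = 0 \<or> \<beta> (snd q) = 0" for q
      using that by (auto simp: \<tau>_def P_def)
    show "eventually (\<lambda>n. s (r n) q = \<tau> q) sequentially" if "fst q \<notin> A" "snd q \<notin> A" for q
    proof (cases "q \<in> P")
      case True
      then show ?thesis
        using t[of "to_nat_on P q"] from_nat_into_to_nat_on[OF \<open>countable P\<close> True]
        by (simp add: e_def \<tau>_def)
    next
      case False
      then have "s n q = 0" for n
        using s_le_\<alpha>[OF that(1), of n "snd q"] s_le_\<beta>[OF that(2), of n "fst q"]
        by (cases q) (auto simp: P_def)
      then show ?thesis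
        using False by (simp add: \<tau>_def)
    qed
  qed
qed

lemma eventually_Cost_le:
  assumes "strict_mono r" and "(\<eta>::real) > 0"
  shows "eventually (\<lambda>n. Cost d p (s (r n)) \<le> W + ennreal \<eta>) sequentially"
proof -
  obtain N :: nat where N: "1 / Suc N < \<eta>"
    using reals_Archimedean[OF assms(2)] by (auto simp: inverse_eq_divide)
  have "Cost d p (s (r n)) \<le> W + ennreal \<eta>" if "n \<ge> N" for n
  proof -
    have "N \<le> r n"
      using that strict_mono_imp_increasing[OF assms(1), of n] by simp
    then have "1 / real (Suc (r n)) \<le> 1 / real (Suc N)"
      by (intro divide_left_mono) auto
    then have "W + ennreal (1 / Suc (r n)) \<le> W + ennreal \<eta>"
      using N by (intro add_left_mono ennreal_leI) simp
    then show ?thesis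
      using Cost_s[of "r n"] by (rule order_trans[rotated])
  qed
  then show ?thesis
    by (auto simp: eventually_sequentially)
qed

lemma minimizing_sequence_swap: "minimizing_sequence d A \<beta> \<alpha> (\<lambda>n q. s n (prod.swap q)) p W"
proof
  show "coupling A \<beta> \<alpha> (\<lambda>q. s n (prod.swap q))" for n
    by (rule coupling_swap[OF coupling_s])
  show "Cost d p (\<lambda>q. s n (prod.swap q)) \<le> W + ennreal (1 / Suc n)" for n
    using Cost_s[of n] by (simp only: Cost_swap[OF emetric])
qed (fact emetric dgm_\<alpha> dgm_\<beta> far_\<alpha> far_\<beta> p W_finite)+

end

locale pointwise_limit = minimizing_sequence +
  fixes r :: "nat \<Rightarrow> nat" and \<tau> :: "'a \<times> 'a \<Rightarrow> nat"
  assumes strict_mono_r: "strict_mono r"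
    and \<tau>_zero: "\<And>q. \<alpha> (fst q) = 0 \<or> \<beta> (snd q) = 0 \<Longrightarrow> \<tau> q = 0"
    and \<tau>_limit: "\<And>q. fst q \<notin> A \<Longrightarrow> snd q \<notin> A \<Longrightarrow> eventually (\<lambda>n. s (r n) q = \<tau> q) sequentially"
begin

definition limit_row :: "'a \<Rightarrow> 'a set" where
  "limit_row u = {v. \<tau> (u, v) \<noteq> 0}"

definition defect :: "'a \<Rightarrow> nat" where
  "defect u = \<alpha> u - (\<Sum>v\<in>limit_row u. \<tau> (u, v))"

lemma \<tau>_nonzeroD:
  assumes "\<tau> (u, v) \<noteq> 0"
  shows "\<alpha> u \<noteq> 0" and "\<beta> v \<noteq> 0" and "u \<notin> A" and "v \<notin> A"
  using \<tau>_zero[of "(u, v)"] assms \<alpha>_zero[of u] \<beta>_zero[of v] by (metis fst_conv snd_conv)+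

lemma eventually_s_eq_\<tau>:
  assumes "finite Q" and "\<And>q. q \<in> Q \<Longrightarrow> fst q \<notin> A \<and> snd q \<notin> A"
  shows "eventually (\<lambda>n. \<forall>q\<in>Q. s (r n) q = \<tau> q) sequentially"
  using assms by (intro eventually_ball_finite) (auto intro: \<tau>_limit)

lemma limit_row_subset: "limit_row u \<subseteq> {v. \<beta> v \<noteq> 0} - A"
  using \<tau>_nonzeroD by (auto simp: limit_row_def)

lemma sum_limit_row_le:
  assumes "finite F" and "F \<subseteq> limit_row u"
  shows "(\<Sum>v\<in>F. \<tau> (u, v)) \<le> \<alpha> u"
proof (cases "F = {}")
  case False
  then have u: "u \<notin> A"
    using assms(2) \<tau>_nonzeroD by (auto simp: limit_row_def)
  have "F \<inter> A = {}"
    using assms(2) limit_row_subset by blast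
  then have "eventually (\<lambda>n. \<forall>q\<in>{u} \<times> F. s (r n) q = \<tau> q) sequentially"
    using assms(1) u by (intro eventually_s_eq_\<tau>) auto
  then obtain n where "\<forall>q\<in>{u} \<times> F. s (r n) q = \<tau> q"
    by (auto simp: eventually_sequentially)
  then have "(\<Sum>v\<in>F. \<tau> (u, v)) = (\<Sum>v\<in>F. s (r n) (u, v))"
    by (intro sum.cong) auto
  also have "\<dots> \<le> \<alpha> u"
    using has_row_sum_sum_le[OF s_row_sum[OF u] assms(1)] .
  finally show ?thesis .
qed simp

lemma finite_limit_row: "finite (limit_row u)"
proof -
  have "card F \<le> \<alpha> u" if "F \<subseteq> limit_row u" "finite F" for F
  proof -
    have "card F = (\<Sum>v\<in>F. 1)"
      by simp
    also have "\<dots> \<le> (\<Sum>v\<in>F. \<tau> (u, v))"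
      using that by (intro sum_mono) (auto simp: limit_row_def)
    also have "\<dots> \<le> \<alpha> u"
      using sum_limit_row_le that by simp
    finally show ?thesis .
  qed
  then show ?thesis
    using finite_if_finite_subsets_card_bdd by blast
qed

lemma sum_limit_row_add_defect: "(\<Sum>v\<in>limit_row u. \<tau> (u, v)) + defect u = \<alpha> u"
  using sum_limit_row_le[OF finite_limit_row order.refl] by (simp add: defect_def)

lemma defect_nonzeroD: "defect u \<noteq> 0 \<Longrightarrow> u \<notin> A"
  using \<alpha>_zero by (auto simp: defect_def)

lemma eventually_escaping_mass:
  assumes u: "u \<notin> A" and N: "finite N" "limit_row u \<subseteq> N" "N \<inter> A = {}"
  shows "eventually (\<lambda>n. (\<Sum>v\<in>{v. s (r n) (u, v) \<noteq> 0} - N. s (r n) (u, v)) = defect u) sequentially"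
proof -
  have "eventually (\<lambda>n. \<forall>q\<in>{u} \<times> N. s (r n) q = \<tau> q) sequentially"
    using N u by (intro eventually_s_eq_\<tau>) auto
  moreover have "(\<Sum>v\<in>{v. s (r n) (u, v) \<noteq> 0} - N. s (r n) (u, v)) = defect u"
    if n: "\<forall>q\<in>{u} \<times> N. s (r n) q = \<tau> q" for n
  proof -
    define R where "R = {v. s (r n) (u, v) \<noteq> 0}"
    have R: "finite R" "(\<Sum>v\<in>R. s (r n) (u, v)) = \<alpha> u"
      using s_row_sum[OF u, of "r n"] by (simp_all add: has_row_sum_def R_def)
    have "(\<Sum>v\<in>R \<inter> N. s (r n) (u, v)) = (\<Sum>v\<in>N. s (r n) (u, v))"
      using N(1) by (intro sum.mono_neutral_left) (auto simp: R_def)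
    also have "\<dots> = (\<Sum>v\<in>N. \<tau> (u, v))"
      using n by (intro sum.cong) auto
    also have "\<dots> = (\<Sum>v\<in>limit_row u. \<tau> (u, v))"
      using N(1,2) by (intro sum.mono_neutral_right) (auto simp: limit_row_def)
    finally have "\<alpha> u = (\<Sum>v\<in>limit_row u. \<tau> (u, v)) + (\<Sum>v\<in>R - N. s (r n) (u, v))"
      using sum.Int_Diff[OF R(1), of "\<lambda>v. s (r n) (u, v)" N] R(2) by simp
    then show ?thesis
      by (simp add: defect_def R_def)
  qed
  ultimately show ?thesis
    by (rule eventually_mono)
qed

lemma escaping_dist_ge:
  assumes "s n (u, v) \<noteq> 0" and "v \<notin> N" and "{w. \<beta> w \<noteq> 0 \<and> ennreal \<delta> \<le> setdist d w A} \<subseteq> N"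
  shows "setdist d u A - ennreal \<delta> \<le> d u v"
proof (cases "v \<in> A")
  case True
  then show ?thesis
    using setdist_le_dist[OF True, of d u] diff_le_self_ennreal order_trans by blast
next
  case False
  then have "\<beta> v \<noteq> 0"
    using s_le_\<beta>[OF False, of n u] assms(1) by simp
  then have "setdist d v A \<le> ennreal \<delta>"
    using assms(2,3) by force
  then have "setdist d u A \<le> ennreal \<delta> + d u v"
    using setdist_triangle[OF emetric, of u A v] by (metis add.commute add_left_mono order_trans)
  then show ?thesis
    by (simp add: ennreal_minus_le_iff)
qed

lemma setdist_le_W_if_defect:
  assumes "defect u \<noteq> 0"
  shows "setdist d u A \<le> W"
proof (rule ennreal_le_epsilon)
  fix e :: real
  assume e: "0 < e"
  have u: "u \<notin> A"
    using defect_nonzeroD[OF assms] .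
  define N where "N = limit_row u \<union> {w. \<beta> w \<noteq> 0 \<and> ennreal (e / 2) \<le> setdist d w A}"
  have N: "finite N" "limit_row u \<subseteq> N" "N \<inter> A = {}"
    using finite_limit_row far_\<beta>[of "e / 2"] e limit_row_subset \<beta>_zero by (auto simp: N_def)
  have "eventually (\<lambda>n. (\<Sum>v\<in>{v. s (r n) (u, v) \<noteq> 0} - N. s (r n) (u, v)) = defect u \<and>
      Cost d p (s (r n)) \<le> W + ennreal (e / 2)) sequentially"
    using eventually_escaping_mass[OF u N] eventually_Cost_le[OF strict_mono_r, of "e / 2"] e
    by (auto intro: eventually_conj)
  then obtain n where n: "(\<Sum>v\<in>{v. s (r n) (u, v) \<noteq> 0} - N. s (r n) (u, v)) = defect u"
    "Cost d p (s (r n)) \<le> W + ennreal (e / 2)"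
    by (auto simp: eventually_sequentially)
  have "{v. s (r n) (u, v) \<noteq> 0} - N \<noteq> {}"
  proof
    assume "{v. s (r n) (u, v) \<noteq> 0} - N = {}"
    then show False
      using n(1) assms by (metis sum.empty)
  qed
  then obtain v where v: "s (r n) (u, v) \<noteq> 0" "v \<notin> N"
    by blast
  have "setdist d u A \<le> ennreal (e / 2) + d u v"
    using escaping_dist_ge[OF v] by (simp add: N_def ennreal_minus_le_iff)
  also have "\<dots> \<le> ennreal (e / 2) + (W + ennreal (e / 2))"
    using dist_le_Cost[OF p, of "s (r n)" "(u, v)" d] v(1) n(2) by (intro add_left_mono) simp
  also have "\<dots> = W + ennreal e"
    using e by (simp add: add_ac flip: ennreal_plus)
  finally show "setdist d u A \<le> W + ennreal e" .
qed

lemma dist_le_W_if_\<tau>: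
  assumes "\<tau> (u, v) \<noteq> 0"
  shows "d u v \<le> W"
proof (rule ennreal_le_epsilon)
  fix e :: real
  assume e: "0 < e"
  have "eventually (\<lambda>n. s (r n) (u, v) = \<tau> (u, v) \<and> Cost d p (s (r n)) \<le> W + ennreal e) sequentially"
    using \<tau>_limit[of "(u, v)"] \<tau>_nonzeroD[OF assms] eventually_Cost_le[OF strict_mono_r e]
    by (auto intro: eventually_conj)
  then obtain n where "s (r n) (u, v) = \<tau> (u, v)" "Cost d p (s (r n)) \<le> W + ennreal e"
    by (auto simp: eventually_sequentially)
  then show "d u v \<le> W + ennreal e"
    using dist_le_Cost[OF p, of "s (r n)" "(u, v)" d] assms by simp
qed

lemma eventually_escaping_cost:
  fixes g :: "ennreal \<Rightarrow> ennreal"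
  assumes g: "mono g" and u: "u \<notin> A" and N: "finite N" "limit_row u \<subseteq> N" "N \<inter> A = {}"
    and far: "{w. \<beta> w \<noteq> 0 \<and> ennreal \<delta> \<le> setdist d w A} \<subseteq> N"
  shows "eventually (\<lambda>n. of_nat (defect u) * g (setdist d u A - ennreal \<delta>) \<le>
     (\<Sum>v\<in>{v. s (r n) (u, v) \<noteq> 0} - N. of_nat (s (r n) (u, v)) * g (d u v))) sequentially"
  using eventually_escaping_mass[OF u N]
proof (rule eventually_mono)
  fix n
  define S where "S = {v. s (r n) (u, v) \<noteq> 0} - N"
  assume escaping: "(\<Sum>v\<in>{v. s (r n) (u, v) \<noteq> 0} - N. s (r n) (u, v)) = defect u"
  have "of_nat (defect u) * g (setdist d u A - ennreal \<delta>)
      = (\<Sum>v\<in>S. of_nat (s (r n) (u, v)) * g (setdist d u A - ennreal \<delta>))"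
    unfolding escaping[symmetric] S_def by (simp add: sum_distrib_right)
  also have "\<dots> \<le> (\<Sum>v\<in>S. of_nat (s (r n) (u, v)) * g (d u v))"
    using escaping_dist_ge[OF _ _ far] monoD[OF g]
    by (intro sum_mono mult_left_mono) (auto simp: S_def)
  finally show "of_nat (defect u) * g (setdist d u A - ennreal \<delta>) \<le>
      (\<Sum>v\<in>{v. s (r n) (u, v) \<noteq> 0} - N. of_nat (s (r n) (u, v)) * g (d u v))"
    by (simp add: S_def)
qed

lemma escaping_cost_sum:
  fixes g :: "ennreal \<Rightarrow> ennreal"
  assumes g: "mono g" and U: "finite U" "U \<inter> A = {}" and F: "finite F" "F \<inter> A = {}"
    and \<delta>: "\<delta> > 0"
  obtains N where "F \<subseteq> N" and "\<And>n. finite (Sigma U (\<lambda>u. {v. s n (u, v) \<noteq> 0} - N))"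
    and "eventually (\<lambda>n. (\<Sum>u\<in>U. of_nat (defect u) * g (setdist d u A - ennreal \<delta>)) \<le>
      (\<Sum>q\<in>Sigma U (\<lambda>u. {v. s (r n) (u, v) \<noteq> 0} - N). of_nat (s (r n) q) * g (d (fst q) (snd q))))
      sequentially"
proof
  define N where "N = F \<union> \<Union> (limit_row ` U) \<union> {w. \<beta> w \<noteq> 0 \<and> ennreal \<delta> \<le> setdist d w A}"
  show "F \<subseteq> N"
    by (auto simp: N_def)
  show "finite (Sigma U (\<lambda>u. {v. s n (u, v) \<noteq> 0} - N))" for n
    using U(2) by (intro finite_SigmaI finite_Diff U(1) finite_row_support) auto
  have "\<Union> (limit_row ` U) \<inter> A = {}"
    using limit_row_subset by blast
  then have N: "finite N" "N \<inter> A = {}"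
    using U F finite_limit_row far_\<beta>[OF \<delta>] \<beta>_zero by (auto simp: N_def)
  have "eventually (\<lambda>n. \<forall>u\<in>U. of_nat (defect u) * g (setdist d u A - ennreal \<delta>) \<le>
      (\<Sum>v\<in>{v. s (r n) (u, v) \<noteq> 0} - N. of_nat (s (r n) (u, v)) * g (d u v))) sequentially"
    using U N by (intro eventually_ball_finite ballI eventually_escaping_cost[OF g]) (auto simp: N_def)
  moreover have "(\<Sum>u\<in>U. \<Sum>v\<in>{v. s (r n) (u, v) \<noteq> 0} - N. of_nat (s (r n) (u, v)) * g (d u v))
      = (\<Sum>q\<in>Sigma U (\<lambda>u. {v. s (r n) (u, v) \<noteq> 0} - N). of_nat (s (r n) q) * g (d (fst q) (snd q)))"
    for n
    using U finite_row_support by (subst sum.Sigma) (auto simp: case_prod_beta)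
  ultimately show "eventually (\<lambda>n. (\<Sum>u\<in>U. of_nat (defect u) * g (setdist d u A - ennreal \<delta>)) \<le>
      (\<Sum>q\<in>Sigma U (\<lambda>u. {v. s (r n) (u, v) \<noteq> 0} - N). of_nat (s (r n) q) * g (d (fst q) (snd q))))
      sequentially"
    by (auto elim!: eventually_mono intro: order_trans[OF sum_mono])
qed

lemma nearest_if_defect:
  assumes "dist_minimizing d A" and "defect u \<noteq> 0"
  shows "nearest d A u \<in> A" and "d u (nearest d A u) = setdist d u A"
  using nearest[OF assms(1)] setdist_le_W_if_defect[OF assms(2)] W_finite
  by (meson order.strict_trans1)+

lemma has_row_sum_with_defect:
  assumes u: "u \<notin> A" and f: "\<And>v. f (u, v) = \<tau> (u, v) + (if v = a then defect u else 0)"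
  shows "has_row_sum f u (\<alpha> u)"
proof -
  define R where "R = insert a (limit_row u)"
  have R: "finite R" "{v. f (u, v) \<noteq> 0} \<subseteq> R"
    using finite_limit_row by (auto simp: R_def limit_row_def f split: if_splits)
  have "(\<Sum>v\<in>R. f (u, v)) = (\<Sum>v\<in>R. \<tau> (u, v)) + defect u"
    using R(1) by (simp add: f sum.distrib R_def)
  also have "(\<Sum>v\<in>R. \<tau> (u, v)) = (\<Sum>v\<in>limit_row u. \<tau> (u, v))"
    using R(1) by (intro sum.mono_neutral_right) (auto simp: R_def limit_row_def)
  finally show ?thesis
    using has_row_sum_iff[OF R] sum_limit_row_add_defect by simp
qed

lemma sum_defect_part:
  assumes dm: "dist_minimizing d A" and E: "finite E"
  shows "(\<Sum>q\<in>E. of_nat (if snd q = nearest d A (fst q) then defect (fst q) else 0) * g (d (fst q) (snd q)))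
    = (\<Sum>u\<in>fst ` {q\<in>E. snd q = nearest d A (fst q) \<and> defect (fst q) \<noteq> 0}. of_nat (defect u) * g (setdist d u A))"
proof -
  define E' where "E' = {q\<in>E. snd q = nearest d A (fst q) \<and> defect (fst q) \<noteq> 0}"
  have "inj_on fst E'"
    by (auto simp: inj_on_def E'_def prod_eq_iff)
  moreover have "d (fst q) (snd q) = setdist d (fst q) A" if "q \<in> E'" for q
    using that nearest_if_defect(2)[OF dm] by (auto simp: E'_def)
  ultimately have "(\<Sum>q\<in>E'. of_nat (defect (fst q)) * g (d (fst q) (snd q)))
      = (\<Sum>u\<in>fst ` E'. of_nat (defect u) * g (setdist d u A))"
    by (simp add: sum.reindex)
  moreover have "(\<Sum>q\<in>E. of_nat (if snd q = nearest d A (fst q) then defect (fst q) else 0) * g (d (fst q) (snd q)))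
      = (\<Sum>q\<in>E'. of_nat (defect (fst q)) * g (d (fst q) (snd q)))"
    using E by (intro sum.mono_neutral_cong_right) (auto simp: E'_def)
  ultimately show ?thesis
    by (simp add: E'_def)
qed

lemma pointwise_limit_swap:
  "pointwise_limit d A \<beta> \<alpha> (\<lambda>n q. s n (prod.swap q)) p W r (\<lambda>q. \<tau> (prod.swap q))"
  using minimizing_sequence_swap strict_mono_r \<tau>_zero \<tau>_limit
  by (simp add: pointwise_limit_def pointwise_limit_axioms_def)

end

locale limit_completion = pointwise_limit +
  T: pointwise_limit d A \<beta> \<alpha> "\<lambda>n q. s n (prod.swap q)" p W r "\<lambda>q. \<tau> (prod.swap q)" +
  assumes dist_minimizing: "dist_minimizing d A"
begin

definition completion :: "'a \<times> 'a \<Rightarrow> nat" where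
  "completion q = \<tau> q + (if snd q = nearest d A (fst q) then defect (fst q) else 0)
     + (if fst q = nearest d A (snd q) then T.defect (snd q) else 0)"

lemma completion_row:
  assumes "u \<notin> A"
  shows "completion (u, v) = \<tau> (u, v) + (if v = nearest d A u then defect u else 0)"
  using assms T.nearest_if_defect(1)[OF dist_minimizing, of v] by (auto simp: completion_def)

lemma completion_col:
  assumes "v \<notin> A"
  shows "completion (u, v) = \<tau> (u, v) + (if u = nearest d A v then T.defect v else 0)"
  using assms nearest_if_defect(1)[OF dist_minimizing, of u] by (auto simp: completion_def)

lemma completion_support:
  "{q. completion q \<noteq> 0} \<subseteq> {u. \<alpha> u \<noteq> 0} \<times> {v. \<beta> v \<noteq> 0} \<union>
    (\<lambda>u. (u, nearest d A u)) ` {u. \<alpha> u \<noteq> 0} \<union> (\<lambda>v. (nearest d A v, v)) ` {v. \<beta> v \<noteq> 0}"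
proof (rule subsetI)
  fix q
  assume "q \<in> {q. completion q \<noteq> 0}"
  then consider "\<tau> q \<noteq> 0" | "snd q = nearest d A (fst q)" "defect (fst q) \<noteq> 0"
    | "fst q = nearest d A (snd q)" "T.defect (snd q) \<noteq> 0"
    by (auto simp: completion_def split: if_splits)
  then show "q \<in> {u. \<alpha> u \<noteq> 0} \<times> {v. \<beta> v \<noteq> 0} \<union>
      (\<lambda>u. (u, nearest d A u)) ` {u. \<alpha> u \<noteq> 0} \<union> (\<lambda>v. (nearest d A v, v)) ` {v. \<beta> v \<noteq> 0}"
  proof cases
    case 1
    then show ?thesis
      using \<tau>_nonzeroD(1,2)[of "fst q" "snd q"] by (cases q) auto
  next
    case 2
    then have "\<alpha> (fst q) \<noteq> 0"
      by (simp add: defect_def)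
    with 2 show ?thesis
      by (cases q) auto
  next
    case 3
    then have "\<beta> (snd q) \<noteq> 0"
      by (simp add: T.defect_def)
    with 3 show ?thesis
      by (cases q) auto
  qed
qed

lemma coupling_completion: "coupling A \<alpha> \<beta> completion"
  unfolding coupling_def
proof (intro conjI ballI allI impI)
  show "completion (u, v) = 0" if "u \<in> A" "v \<in> A" for u v
    using that \<tau>_nonzeroD(3)[of u v] defect_nonzeroD[of u] T.defect_nonzeroD[of v]
    by (auto simp: completion_def)
  have "countable ({u. \<alpha> u \<noteq> 0} \<times> {v. \<beta> v \<noteq> 0} \<union>
      (\<lambda>u. (u, nearest d A u)) ` {u. \<alpha> u \<noteq> 0} \<union> (\<lambda>v. (nearest d A v, v)) ` {v. \<beta> v \<noteq> 0})"
    using dgm_\<alpha> dgm_\<beta> by (simp add: dgm_def)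
  then show "countable {q. completion q \<noteq> 0}"
    by (rule countable_subset[OF completion_support])
  show "has_row_sum completion u (\<alpha> u)" if "u \<notin> A" for u
    using that by (rule has_row_sum_with_defect) (rule completion_row[OF that])
  show "has_row_sum (\<lambda>q. completion (prod.swap q)) v (\<beta> v)" if "v \<notin> A" for v
    using that by (rule T.has_row_sum_with_defect) (simp add: completion_col[OF that])
qed

lemma dist_le_W_if_completion:
  assumes "completion (u, v) \<noteq> 0"
  shows "d u v \<le> W"
proof -
  consider "\<tau> (u, v) \<noteq> 0" | "v = nearest d A u" "defect u \<noteq> 0" | "u = nearest d A v" "T.defect v \<noteq> 0"
    using assms by (auto simp: completion_def split: if_splits)
  then show ?thesis
  proof cases
    case 1
    then show ?thesis
      by (rule dist_le_W_if_\<tau>)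
  next
    case 2
    then show ?thesis
      using nearest_if_defect(2)[OF dist_minimizing] setdist_le_W_if_defect by simp
  next
    case 3
    then show ?thesis
      using T.nearest_if_defect(2)[OF dist_minimizing] T.setdist_le_W_if_defect by (simp add: d_sym)
  qed
qed

lemma Cost_completion_le_top_exponent: "p = \<infinity> \<Longrightarrow> Cost d p completion \<le> W"
  unfolding Cost_def using dist_le_W_if_completion by (auto intro!: SUP_least)

abbreviation weight :: "ennreal \<Rightarrow> ennreal" where
  "weight t \<equiv> enn_powr t (enn2real p)"

lemma mono_weight: "mono weight"
  by (auto intro!: monoI enn_powr_mono)

lemma limit_parts_le_shifted:
  assumes p_finite: "p \<noteq> \<infinity>" and E: "finite E" "E \<subseteq> {q. \<tau> q \<noteq> 0}"
    and U: "finite U" "U \<inter> A = {}" and V: "finite V" "V \<inter> A = {}"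
    and \<delta>: "\<delta> > 0" and \<eta>: "\<eta> > 0"
  shows "(\<Sum>q\<in>E. of_nat (\<tau> q) * weight (d (fst q) (snd q)))
      + (\<Sum>u\<in>U. of_nat (defect u) * weight (setdist d u A - ennreal \<delta>))
      + (\<Sum>v\<in>V. of_nat (T.defect v) * weight (setdist d v A - ennreal \<delta>)) \<le> weight (W + ennreal \<eta>)"
proof -
  define f where "f n q = of_nat (s (r n) q) * weight (d (fst q) (snd q))" for n q
  have E_off_A: "fst q \<notin> A \<and> snd q \<notin> A" if "q \<in> E" for q
    using that E(2) \<tau>_nonzeroD[of "fst q" "snd q"] by auto
  then obtain N where N: "snd ` E \<subseteq> N" "\<And>n. finite (Sigma U (\<lambda>u. {v. s n (u, v) \<noteq> 0} - N))"
    and rows: "eventually (\<lambda>n. (\<Sum>u\<in>U. of_nat (defect u) * weight (setdist d u A - ennreal \<delta>))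
      \<le> (\<Sum>q\<in>Sigma U (\<lambda>u. {v. s (r n) (u, v) \<noteq> 0} - N). f n q)) sequentially"
    using escaping_cost_sum[OF mono_weight U, of "snd ` E" \<delta>] E(1) \<delta> unfolding f_def by blast
  obtain M where M: "fst ` E \<union> U \<subseteq> M" "\<And>n. finite (Sigma V (\<lambda>v. {u. s n (u, v) \<noteq> 0} - M))"
    and "eventually (\<lambda>n. (\<Sum>v\<in>V. of_nat (T.defect v) * weight (setdist d v A - ennreal \<delta>))
      \<le> (\<Sum>q\<in>Sigma V (\<lambda>v. {u. s (r n) (u, v) \<noteq> 0} - M). of_nat (s (r n) (prod.swap q))
          * weight (d (fst q) (snd q)))) sequentially"
  proof (rule T.escaping_cost_sum[OF mono_weight V _ _ \<delta>])
    show "finite (fst ` E \<union> U)" "(fst ` E \<union> U) \<inter> A = {}"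
      using E(1) E_off_A U by auto
  qed (simp only: swap_simp)
  then have cols: "eventually (\<lambda>n. (\<Sum>v\<in>V. of_nat (T.defect v) * weight (setdist d v A - ennreal \<delta>))
      \<le> (\<Sum>q\<in>Sigma V (\<lambda>v. {u. s (r n) (u, v) \<noteq> 0} - M). f n (prod.swap q))) sequentially"
    by (simp add: f_def d_sym)
  obtain n where n: "\<forall>q\<in>E. s (r n) q = \<tau> q" "Cost d p (s (r n)) \<le> W + ennreal \<eta>"
    "(\<Sum>u\<in>U. of_nat (defect u) * weight (setdist d u A - ennreal \<delta>))
      \<le> (\<Sum>q\<in>Sigma U (\<lambda>u. {v. s (r n) (u, v) \<noteq> 0} - N). f n q)"
    "(\<Sum>v\<in>V. of_nat (T.defect v) * weight (setdist d v A - ennreal \<delta>))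
      \<le> (\<Sum>q\<in>Sigma V (\<lambda>v. {u. s (r n) (u, v) \<noteq> 0} - M). f n (prod.swap q))"
    using eventually_conj[OF eventually_conj[OF eventually_s_eq_\<tau>[OF E(1) E_off_A]
        eventually_Cost_le[OF strict_mono_r \<eta>]] eventually_conj[OF rows cols]]
    by (auto simp: eventually_sequentially)
  define R where "R = Sigma U (\<lambda>u. {v. s (r n) (u, v) \<noteq> 0} - N)"
  define C where "C = prod.swap ` Sigma V (\<lambda>v. {u. s (r n) (u, v) \<noteq> 0} - M)"
  have finite: "finite R" "finite C" and disjoint: "E \<inter> R = {}" "(E \<union> R) \<inter> C = {}"
    using N M by (force simp: R_def C_def)+
  have "(\<Sum>q\<in>E. of_nat (\<tau> q) * weight (d (fst q) (snd q)))
      + (\<Sum>u\<in>U. of_nat (defect u) * weight (setdist d u A - ennreal \<delta>))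
      + (\<Sum>v\<in>V. of_nat (T.defect v) * weight (setdist d v A - ennreal \<delta>))
      \<le> (\<Sum>q\<in>E. f n q) + (\<Sum>q\<in>R. f n q) + (\<Sum>q\<in>C. f n q)"
    using n(1,3,4) by (intro add_mono) (auto simp: f_def R_def C_def sum.reindex intro: sum.cong)
  also have "\<dots> = (\<Sum>q\<in>E \<union> R \<union> C. f n q)"
    using E(1) finite disjoint by (simp add: sum.union_disjoint)
  also have "\<dots> \<le> weight (W + ennreal \<eta>)"
    unfolding f_def using E(1) finite p p_finite n(2) by (intro sum_weighted_dist_le_Cost) auto
  finally show ?thesis .
qed

lemma limit_parts_le:
  assumes p_finite: "p \<noteq> \<infinity>" and E: "finite E" "E \<subseteq> {q. \<tau> q \<noteq> 0}"
    and U: "finite U" "U \<inter> A = {}" and V: "finite V" "V \<inter> A = {}" and \<eta>: "\<eta> > 0"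
  shows "(\<Sum>q\<in>E. of_nat (\<tau> q) * weight (d (fst q) (snd q)))
      + (\<Sum>u\<in>U. of_nat (defect u) * weight (setdist d u A))
      + (\<Sum>v\<in>V. of_nat (T.defect v) * weight (setdist d v A)) \<le> weight (W + ennreal \<eta>)"
proof (rule LIMSEQ_le_const2)
  have "enn2real p > 0"
    using enn2real_exponent_ge_1[OF p p_finite] by simp
  then have "(\<lambda>k. weight (t - ennreal (1 / Suc k))) \<longlonglongrightarrow> weight t" for t
    by (intro tendsto_enn_powr_minus LIMSEQ_Suc[OF lim_inverse_n']) (auto simp: inverse_eq_divide)
  then show "(\<lambda>k. (\<Sum>q\<in>E. of_nat (\<tau> q) * weight (d (fst q) (snd q)))
      + (\<Sum>u\<in>U. of_nat (defect u) * weight (setdist d u A - ennreal (1 / Suc k)))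
      + (\<Sum>v\<in>V. of_nat (T.defect v) * weight (setdist d v A - ennreal (1 / Suc k))))
    \<longlonglongrightarrow> (\<Sum>q\<in>E. of_nat (\<tau> q) * weight (d (fst q) (snd q)))
      + (\<Sum>u\<in>U. of_nat (defect u) * weight (setdist d u A))
      + (\<Sum>v\<in>V. of_nat (T.defect v) * weight (setdist d v A))"
    by (intro tendsto_add tendsto_const tendsto_sum ennreal_tendsto_cmult) (auto simp: of_nat_less_top)
  show "\<exists>N. \<forall>k\<ge>N. (\<Sum>q\<in>E. of_nat (\<tau> q) * weight (d (fst q) (snd q)))
      + (\<Sum>u\<in>U. of_nat (defect u) * weight (setdist d u A - ennreal (1 / Suc k)))
      + (\<Sum>v\<in>V. of_nat (T.defect v) * weight (setdist d v A - ennreal (1 / Suc k)))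
      \<le> weight (W + ennreal \<eta>)"
    using limit_parts_le_shifted[OF p_finite E U V _ \<eta>] by auto
qed

lemma sum_completion_le:
  assumes p_finite: "p \<noteq> \<infinity>" and E: "finite E" and \<eta>: "\<eta> > 0"
  shows "(\<Sum>q\<in>E. of_nat (completion q) * weight (d (fst q) (snd q))) \<le> weight (W + ennreal \<eta>)"
proof -
  define U where "U = fst ` {q\<in>E. snd q = nearest d A (fst q) \<and> defect (fst q) \<noteq> 0}"
  define V where "V = fst ` {q\<in>prod.swap ` E. snd q = nearest d A (fst q) \<and> T.defect (fst q) \<noteq> 0}"
  have U: "finite U" "U \<inter> A = {}" and V: "finite V" "V \<inter> A = {}"
    using E defect_nonzeroD T.defect_nonzeroD by (auto simp: U_def V_def)
  have "(\<Sum>q\<in>E. of_nat (completion q) * weight (d (fst q) (snd q)))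
      = (\<Sum>q\<in>E. of_nat (\<tau> q) * weight (d (fst q) (snd q)))
      + (\<Sum>q\<in>E. of_nat (if snd q = nearest d A (fst q) then defect (fst q) else 0) * weight (d (fst q) (snd q)))
      + (\<Sum>q\<in>prod.swap ` E. of_nat (if snd q = nearest d A (fst q) then T.defect (fst q) else 0)
          * weight (d (fst q) (snd q)))"
  proof -
    have "(\<Sum>q\<in>prod.swap ` E. of_nat (if snd q = nearest d A (fst q) then T.defect (fst q) else 0)
          * weight (d (fst q) (snd q)))
        = (\<Sum>q\<in>E. of_nat (if fst q = nearest d A (snd q) then T.defect (snd q) else 0)
          * weight (d (fst q) (snd q)))"
      by (subst sum.reindex) (auto simp: inj_on_def d_sym cong: if_cong)
    then show ?thesis
      by (simp add: completion_def distrib_right sum.distrib)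
  qed
  also have "\<dots> = (\<Sum>q\<in>{q\<in>E. \<tau> q \<noteq> 0}. of_nat (\<tau> q) * weight (d (fst q) (snd q)))
      + (\<Sum>u\<in>U. of_nat (defect u) * weight (setdist d u A))
      + (\<Sum>v\<in>V. of_nat (T.defect v) * weight (setdist d v A))"
  proof -
    have "(\<Sum>q\<in>E. of_nat (\<tau> q) * weight (d (fst q) (snd q)))
        = (\<Sum>q\<in>{q\<in>E. \<tau> q \<noteq> 0}. of_nat (\<tau> q) * weight (d (fst q) (snd q)))"
      using E by (intro sum.mono_neutral_right) auto
    then show ?thesis
      using sum_defect_part[OF dist_minimizing E, of weight]
        T.sum_defect_part[OF dist_minimizing finite_imageI[OF E], of weight]
      by (simp only: U_def V_def)
  qed
  also have "\<dots> \<le> weight (W + ennreal \<eta>)"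
    using E by (intro limit_parts_le[OF p_finite _ _ U V \<eta>]) auto
  finally show ?thesis .
qed

lemma Cost_completion_le: "Cost d p completion \<le> W"
proof (cases "p = \<infinity>")
  case True
  then show ?thesis
    by (rule Cost_completion_le_top_exponent)
next
  case False
  show ?thesis
  proof (rule ennreal_le_epsilon)
    fix \<eta> :: real
    assume "0 < \<eta>"
    have "countable {q. of_nat (completion q) * weight (d (fst q) (snd q)) \<noteq> 0}"
      using coupling_completion by (auto simp: coupling_def intro: countable_subset)
    then have "(\<integral>\<^sup>+q. of_nat (completion q) * weight (d (fst q) (snd q)) \<partial>count_space UNIV)
        \<le> weight (W + ennreal \<eta>)"
      using sum_completion_le[OF False _ \<open>0 < \<eta>\<close>] by (rule nn_integral_count_space_le_finite_sums)
    then show "Cost d p completion \<le> W + ennreal \<eta>"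
      using Cost_le_iff[OF p False, of d completion "W + ennreal \<eta>"] by simp
  qed
qed

end

lemma ex_optimal_matching:
  assumes emetric: "emetric d" and p: "1 \<le> p" and dm: "dist_minimizing d A"
    and \<alpha>: "\<alpha> \<in> Dp d A p" and \<beta>: "\<beta> \<in> Dp d A p" and W: "Wp d A p \<alpha> \<beta> < \<infinity>"
  shows "\<exists>\<sigma>\<in>dgm (A \<times> A). is_matching A \<alpha> \<beta> \<sigma> \<and> Cost d p \<sigma> = Wp d A p \<alpha> \<beta>"
proof -
  obtain s where s: "\<And>n. is_matching A \<alpha> \<beta> (s n)"
    "\<And>n. Cost d p (s n) \<le> Wp d A p \<alpha> \<beta> + ennreal (1 / Suc n)"
    using ex_minimizing_matchings[OF W] by blast
  interpret minimizing_sequence d A \<alpha> \<beta> s p "Wp d A p \<alpha> \<beta>"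
  proof
    show "coupling A \<alpha> \<beta> (s n)" for n
      using s(1) by (rule coupling_if_matching)
    show "finite {u. \<alpha> u \<noteq> 0 \<and> ennreal \<delta> \<le> setdist d u A}" if "\<delta> > 0" for \<delta>
      using Dp_far_points_finite[OF p \<alpha> that] .
    show "finite {v. \<beta> v \<noteq> 0 \<and> ennreal \<delta> \<le> setdist d v A}" if "\<delta> > 0" for \<delta>
      using Dp_far_points_finite[OF p \<beta> that] .
    show "\<alpha> \<in> dgm A" "\<beta> \<in> dgm A"
      using \<alpha> \<beta> Dp_subset_dgm by blast+
  qed (fact emetric p W s(2))+
  obtain r \<tau> where lim: "strict_mono r" "\<And>q. \<alpha> (fst q) = 0 \<or> \<beta> (snd q) = 0 \<Longrightarrow> \<tau> q = 0"
    "\<And>q. fst q \<notin> A \<Longrightarrow> snd q \<notin> A \<Longrightarrow> eventually (\<lambda>n. s (r n) q = \<tau> q) sequentially"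
    using ex_pointwise_limit by blast
  interpret pointwise_limit d A \<alpha> \<beta> s p "Wp d A p \<alpha> \<beta>" r \<tau>
    by (rule pointwise_limit.intro[OF minimizing_sequence_axioms pointwise_limit_axioms.intro[OF lim]])
  interpret limit_completion d A \<alpha> \<beta> s p "Wp d A p \<alpha> \<beta>" r \<tau>
    by (rule limit_completion.intro[OF pointwise_limit_axioms pointwise_limit_swap
          limit_completion_axioms.intro[OF dm]])
  have "is_matching A \<alpha> \<beta> completion"
    using matching_if_coupling dgm_\<alpha> dgm_\<beta> coupling_completion by blast
  moreover have "Cost d p completion = Wp d A p \<alpha> \<beta>"
    using Wp_le_Cost[OF \<open>is_matching A \<alpha> \<beta> completion\<close>] Cost_completion_le by (rule antisym[rotated])
  ultimately show ?thesis
    using coupling_in_dgm[OF coupling_completion] by blast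
qed

lemma setdist_attained_if_matching_le:
  assumes p: "1 \<le> p" and x: "x \<notin> A" and \<sigma>: "is_matching A (indicator {x}) (\<lambda>_. 0) \<sigma>"
    and Cost: "Cost d p \<sigma> \<le> setdist d x A"
  shows "\<exists>a\<in>A. setdist d x A = d x a"
proof -
  have "indicator {x} x \<noteq> (0 :: nat)"
    by simp
  then obtain a where a: "a \<in> A" "\<sigma> (x, a) \<noteq> 0"
    using coupling_to_zero_partner[OF coupling_if_matching[OF \<sigma>] x] by blast
  have "d x a \<le> setdist d x A"
    using dist_le_Cost[OF p, of \<sigma> "(x, a)" d] a(2) Cost by simp
  moreover have "setdist d x A \<le> d x a"
    using setdist_le_dist[OF a(1)] .
  ultimately show ?thesis
    using a(1) by (intro bexI[of _ a]) simp_all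
qed

lemma dist_minimizing_if_optimal_matchings:
  assumes emetric: "emetric d" and p: "1 \<le> p"
    and optimal: "\<forall>\<alpha>\<in>Dp d A p. \<forall>\<beta>\<in>Dp d A p. Wp d A p \<alpha> \<beta> < \<infinity> \<longrightarrow>
            (\<exists>\<sigma>\<in>dgm (A \<times> A). is_matching A \<alpha> \<beta> \<sigma> \<and> Cost d p \<sigma> = Wp d A p \<alpha> \<beta>)"
  shows "dist_minimizing d A"
  unfolding dist_minimizing_def
proof (intro allI impI)
  fix x
  assume finite: "setdist d x A < \<infinity>"
  show "\<exists>a\<in>A. setdist d x A = d x a"
  proof (cases "x \<in> A")
    case True
    then have "setdist d x A \<le> d x x"
      by (rule setdist_le_dist)
    moreover have "d x x = 0"
      using emetric by (simp add: emetric_def)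
    ultimately show ?thesis
      using True by (intro bexI[of _ x]) auto
  next
    case False
    have W: "Wp d A p (indicator {x}) (\<lambda>_. 0) \<le> setdist d x A"
      by (rule Wp_indicator_le_setdist[OF p False])
    then have "Wp d A p (indicator {x}) (\<lambda>_. 0) < \<infinity>"
      using finite by (rule order.strict_trans1)
    then obtain \<sigma> where "is_matching A (indicator {x}) (\<lambda>_. 0) \<sigma>"
      "Cost d p \<sigma> = Wp d A p (indicator {x}) (\<lambda>_. 0)"
      using optimal indicator_in_Dp[OF p False finite] zero_in_Dp by blast
    with W show ?thesis
      using setdist_attained_if_matching_le[OF p False] by simp
  qed
qed

theorem theorem4p8:
  fixes d :: "'a \<Rightarrow> 'a \<Rightarrow> ennreal" and A :: "'a set" and p :: ennreal
  assumes "emetric d" and "eclosed d A" and "1 \<le> p"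
  shows "(\<forall>\<alpha>\<in>Dp d A p. \<forall>\<beta>\<in>Dp d A p. Wp d A p \<alpha> \<beta> < \<infinity> \<longrightarrow>
            (\<exists>\<sigma>\<in>dgm (A \<times> A). is_matching A \<alpha> \<beta> \<sigma> \<and> Cost d p \<sigma> = Wp d A p \<alpha> \<beta>))
         \<longleftrightarrow> dist_minimizing d A"
  using dist_minimizing_if_optimal_matchings[OF assms(1,3)] ex_optimal_matching[OF assms(1,3)] by blast

end
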